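(* Let $F(z,w)=\sum_{k=0}^\infty P_k(z)w^k$ be a formal power series in $w$ with coefficients $P_k\in\mathbb C[z]$. Then $F\in\overline{\mathcal H}_2(\mathbb C)$ if and only if $\sum_{k=0}^n(n)_kP_k(z)w^k\in\mathcal H_2(\mathbb C)\cup\{0\}$ for all $n\in\mathbb N$.
   Context: $\mathcal H_2(\mathbb C)$ is the set of non-zero polynomials in $z,w$ that do not vanish when $\Im z>0$ and $\Im w>0$. $\overline{\mathcal H}_2(\mathbb C)$ is the set of entire functions of two variables that are limits, uniformly on compact subsets of $\mathbb C^2$, of polynomials in $\mathcal H_2(\mathbb C)$; $F\in\overline{\mathcal H}_2(\mathbb C)$ means the series defines such an entire function. $(n)_k=n(n-1)\cdots(n-k+1)$ for $k\le n$ and $(n)_k=0$ for $k>n$. *)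

theory Defs
  imports "HOL-Analysis.Analysis" "HOL-Computational_Algebra.Polynomial"
begin

definition is_poly2 :: "(complex \<times> complex \<Rightarrow> complex) \<Rightarrow> bool" where
  "is_poly2 f \<longleftrightarrow> (\<exists>N c. \<forall>z w. f (z, w) = (\<Sum>i<N. \<Sum>j<N. c i j * z ^ i * w ^ j))"

definition H2 :: "(complex \<times> complex \<Rightarrow> complex) \<Rightarrow> bool" where
  "H2 f \<longleftrightarrow> is_poly2 f \<and> f \<noteq> (\<lambda>_. 0) \<and>
     (\<forall>z w. Im z > 0 \<longrightarrow> Im w > 0 \<longrightarrow> f (z, w) \<noteq> 0)"

definition H2bar :: "(complex \<times> complex \<Rightarrow> complex) \<Rightarrow> bool" where
  "H2bar G \<longleftrightarrow> (\<exists>p. (\<forall>n. H2 (p n)) \<and>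
     (\<forall>K. compact K \<longrightarrow> uniform_limit K p G sequentially))"

text \<open>Falling factorial (n)_k = n(n-1)...(n-k+1); equals 0 when k > n.\<close>
definition falling :: "nat \<Rightarrow> nat \<Rightarrow> nat" where
  "falling n k = (\<Prod>i<k. (n - i))"

definition series_in_H2bar :: "(nat \<Rightarrow> complex poly) \<Rightarrow> bool" where
  "series_in_H2bar P \<longleftrightarrow> (\<exists>G. (\<forall>z w. (\<lambda>k. poly (P k) z * w ^ k) sums G (z, w)) \<and> H2bar G)"

end

theory Submission
  imports Defs "HOL-Complex_Analysis.Complex_Analysis"
    "HOL-Computational_Algebra.Fundamental_Theorem_Algebra"
begin

(* Write g_n(z, w) = \<Sum>_{k \<le> n} (n)_k P_k(z) w^k.

   Necessity.  If p is a polynomial without zeros on the product of upper half-planes, then so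
   is (1 + w \<partial>_s)^n p(z, s) evaluated at s = d w for every d > 0 (Laguerre); letting d \<rightarrow> 0 gives
   the polynomial g_n built from the w-coefficients of p.  By Hurwitz's theorem, applied in one
   variable at a time, it is either zero-free or identically zero on the product of half-planes,
   and this dichotomy survives the locally uniform limit along approximants of F, whose
   w-coefficients converge by the Cauchy estimates.

   Sufficiency.  After removing the lowest power of w we may assume P_0 \<noteq> 0, so all g_n are
   zero-free, and then g_n(z, w/n) \<in> H_2(\<complex>) converges to F locally uniformly.  The key is a bound
   uniform in n: a stable polynomial q satisfies
   |q(s)| \<le> |q_0| exp(|q_1/q_0| |s| + (3 |q_1/q_0|^2 + 2 |q_2/q_0|) |s|^2),
   which, applied on the lines z = z_0 + a s (Im z_0 \<ge> 1, a \<ge> 0), bounds g_n(z, w/n) where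
   Im z \<ge> 1 or Im w \<le> -1; the maximum principle on quadratic analytic discs extends the bound
   to bidiscs, and Cauchy estimates then make the coefficients decay geometrically, while
   (n)_k / n^k \<rightarrow> 1 with defect at most k^2/n. *)

section \<open>Stable polynomials\<close>

definition stable_poly :: "complex poly \<Rightarrow> bool" where
  "stable_poly q \<longleftrightarrow> (\<forall>t. 0 < Im t \<longrightarrow> poly q t \<noteq> 0)"

lemma stable_poly_linear_factor:
  assumes "stable_poly q" "degree q > 0"
  obtains r q1 where "q = [:-r, 1:] * q1" "Im r \<le> 0" "stable_poly q1" "degree q1 < degree q"
proof -
  have "\<not> constant (poly q)" using assms(2) by (simp add: constant_degree)
  then obtain r where r: "poly q r = 0" using fundamental_theorem_of_algebra by blast
  then obtain q1 where q1: "q = [:-r, 1:] * q1" using poly_eq_0_iff_dvd by (metis dvdE)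
  have "Im r \<le> 0" using assms(1) r unfolding stable_poly_def by (meson not_le)
  moreover have "stable_poly q1" using assms(1) unfolding stable_poly_def q1 by auto
  moreover have "q1 \<noteq> 0" using q1 assms(2) by auto
  then have "degree q = Suc (degree q1)" unfolding q1 by (subst degree_mult_eq) auto
  ultimately show ?thesis using q1 that by simp
qed

lemma Im_inverse_nonpos: "0 \<le> Im (z :: complex) \<Longrightarrow> Im (1 / z) \<le> 0"
  by (simp add: Im_divide divide_nonpos_nonneg)

lemma stable_poly_Im_logderiv_nonpos:
  assumes "stable_poly q" "0 < Im t"
  shows "Im (poly (pderiv q) t / poly q t) \<le> 0"
  using assms(1)
proof (induction "degree q" arbitrary: q rule: less_induct)
  case less
  show ?case
  proof (cases "degree q = 0")
    case True
    then have "pderiv q = 0" by (simp add: pderiv_eq_0_iff)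
    then show ?thesis by simp
  next
    case False
    then obtain r q1 where q1: "q = [:-r, 1:] * q1" "Im r \<le> 0" "stable_poly q1" "degree q1 < degree q"
      using less.prems stable_poly_linear_factor by blast
    have "poly q1 t \<noteq> 0" "t - r \<noteq> 0" using q1(2,3) assms(2) unfolding stable_poly_def by auto
    then have "poly (pderiv q) t / poly q t = 1 / (t - r) + poly (pderiv q1) t / poly q1 t"
      unfolding q1(1) pderiv_mult by (simp add: pderiv_pCons field_simps)
    moreover have "Im (1 / (t - r)) \<le> 0" using q1(2) assms(2) by (intro Im_inverse_nonpos) simp
    ultimately show ?thesis using less.hyps[OF q1(4,3)] by simp
  qed
qed

definition laguerre_op :: "complex \<Rightarrow> complex poly \<Rightarrow> complex poly" where
  "laguerre_op w q = q + smult w (pderiv q)"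

lemma stable_poly_laguerre_op:
  assumes "stable_poly q" "0 < Im w"
  shows "stable_poly (laguerre_op w q)"
  unfolding stable_poly_def
proof (intro allI impI)
  fix t :: complex assume t: "0 < Im t"
  have nz: "poly q t \<noteq> 0" using assms(1) t stable_poly_def by blast
  define \<rho> where "\<rho> = poly (pderiv q) t / poly q t"
  have "Im \<rho> \<le> 0" using stable_poly_Im_logderiv_nonpos assms(1) t \<rho>_def by blast
  have "0 < Im (- 1 / w)" using assms(2) by (simp add: Im_divide power2_eq_square add_nonneg_pos)
  have "1 + w * \<rho> \<noteq> 0"
  proof
    assume "1 + w * \<rho> = 0"
    moreover have "w \<noteq> 0" using assms(2) by auto
    ultimately have "\<rho> = - 1 / w" by (simp add: field_simps add_eq_0_iff)
    with \<open>Im \<rho> \<le> 0\<close> \<open>0 < Im (- 1 / w)\<close> show False by simp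
  qed
  moreover have "poly (laguerre_op w q) t = poly q t * (1 + w * \<rho>)"
    using nz by (simp add: laguerre_op_def \<rho>_def field_simps)
  ultimately show "poly (laguerre_op w q) t \<noteq> 0" using nz by simp
qed

lemma stable_poly_funpow_laguerre_op:
  "stable_poly q \<Longrightarrow> 0 < Im w \<Longrightarrow> stable_poly ((laguerre_op w ^^ n) q)"
  by (induction n) (auto simp: stable_poly_laguerre_op)

lemma laguerre_op_sum: "laguerre_op w (sum f A) = (\<Sum>k\<in>A. laguerre_op w (f k))"
  by (induction A rule: infinite_finite_induct) (simp_all add: laguerre_op_def pderiv_add smult_add_right)

lemma funpow_laguerre_op_eq:
  "(laguerre_op w ^^ n) q = (\<Sum>k\<le>n. smult (of_nat (n choose k) * w ^ k) ((pderiv ^^ k) q))"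
proof (induction n)
  case 0
  then show ?case by simp
next
  case (Suc n)
  define f where "f j k = smult (of_nat (j choose k) * w ^ k) ((pderiv ^^ k) q)" for j k
  have "(laguerre_op w ^^ Suc n) q = (\<Sum>k\<le>n. f n k) + (\<Sum>k\<le>n. smult w (pderiv (f n k)))"
    by (simp add: Suc f_def laguerre_op_sum) (simp add: laguerre_op_def sum.distrib)
  also have "(\<Sum>k\<le>n. f n k) = f (Suc n) 0 + (\<Sum>k\<le>n. f n (Suc k))"
    using sum.atMost_Suc_shift[of "f n" n] by (simp add: f_def binomial_eq_0)
  also have "\<dots> + (\<Sum>k\<le>n. smult w (pderiv (f n k)))
      = f (Suc n) 0 + (\<Sum>k\<le>n. f n (Suc k) + smult w (pderiv (f n k)))"
    by (simp add: sum.distrib)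
  also have "(\<Sum>k\<le>n. f n (Suc k) + smult w (pderiv (f n k))) = (\<Sum>k\<le>n. f (Suc n) (Suc k))"
    by (intro sum.cong refl) (simp add: f_def pderiv_smult smult_add_left[symmetric] algebra_simps)
  also have "f (Suc n) 0 + \<dots> = (\<Sum>k\<le>Suc n. f (Suc n) k)"
    by (rule sum.atMost_Suc_shift[symmetric])
  finally show ?case by (simp add: f_def)
qed


section \<open>Growth of stable polynomials\<close>

definition root_prod :: "(nat \<Rightarrow> complex) \<Rightarrow> nat \<Rightarrow> complex poly" where
  "root_prod u d = (\<Prod>i<d. [:1, - u i:])"

fun elem_sym2 :: "(nat \<Rightarrow> complex) \<Rightarrow> nat \<Rightarrow> complex" where
  "elem_sym2 u 0 = 0"
| "elem_sym2 u (Suc d) = elem_sym2 u d + u d * (\<Sum>i<d. u i)"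

lemma poly_root_prod: "poly (root_prod u d) s = (\<Prod>i<d. 1 - u i * s)"
  by (simp add: root_prod_def poly_prod mult.commute)

lemma coeff_mult_linear:
  fixes p :: "'a::comm_ring_1 poly"
  shows "coeff (p * [:1, -a:]) 0 = coeff p 0"
    and "coeff (p * [:1, -a:]) (Suc n) = coeff p (Suc n) - a * coeff p n"
  by (simp_all add: mult_pCons_right)

lemma coeffs_root_prod:
  "coeff (root_prod u d) 0 = 1 \<and> coeff (root_prod u d) 1 = - (\<Sum>i<d. u i)
     \<and> coeff (root_prod u d) 2 = elem_sym2 u d"
proof (induction d)
  case 0
  then show ?case by (simp add: root_prod_def numeral_2_eq_2)
next
  case (Suc d)
  have "root_prod u (Suc d) = root_prod u d * [:1, - u d:]" by (simp add: root_prod_def)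
  then show ?case using Suc unfolding numeral_2_eq_2 One_nat_def
    by (simp add: coeff_mult_linear algebra_simps)
qed

lemma stable_poly_root_prod_factorization:
  assumes "stable_poly q" "poly q 0 \<noteq> 0"
  obtains u d where "\<forall>i<d. 0 \<le> Im (u i)" "q = smult (poly q 0) (root_prod u d)"
  using assms
proof (induction "degree q" arbitrary: q thesis rule: less_induct)
  case less
  show ?case
  proof (cases "degree q = 0")
    case True
    then obtain c where "q = [:c:]" by (meson degree_eq_zeroE)
    then show ?thesis by (intro less.prems(1)[of 0 "\<lambda>_. 0"]) (simp_all add: root_prod_def)
  next
    case False
    then obtain r q1 where q1: "q = [:-r, 1:] * q1" "Im r \<le> 0" "stable_poly q1" "degree q1 < degree q"
      using less.prems(2) stable_poly_linear_factor by blast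
    have p0: "poly q 0 = - r * poly q1 0" unfolding q1(1) by simp
    then have "r \<noteq> 0" using less.prems(3) by auto
    define q2 where "q2 = smult (-r) q1"
    have "stable_poly q2" using q1(3) \<open>r \<noteq> 0\<close> unfolding stable_poly_def q2_def by simp
    moreover have "degree q2 < degree q" using q1(4) \<open>r \<noteq> 0\<close> by (simp add: q2_def)
    moreover have "poly q2 0 = poly q 0" using p0 by (simp add: q2_def)
    ultimately obtain u d where ud: "\<forall>i<d. 0 \<le> Im (u i)" "q2 = smult (poly q 0) (root_prod u d)"
      using less.hyps[of q2] less.prems(3) by metis
    have "q = q2 * [:1, - 1 / r:]"
      unfolding q1(1) q2_def using \<open>r \<noteq> 0\<close> by (simp add: mult.commute)
    also have "\<dots> = smult (poly q 0) (root_prod u d * [:1, - 1 / r:])"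
      by (simp only: ud(2) mult_smult_left)
    also have "root_prod u d * [:1, - 1 / r:] = root_prod (u(d := 1 / r)) (Suc d)"
      by (simp add: root_prod_def)
    finally show ?thesis
      using ud(1) q1(2) by (intro less.prems(1)) (auto simp: less_Suc_eq Im_divide divide_nonpos_nonneg)
  qed
qed

lemma sum_squares_elem_sym2: "(\<Sum>i<d. (u i)\<^sup>2) = (\<Sum>i<d. u i)\<^sup>2 - 2 * elem_sym2 u d"
  by (induction d) (simp_all add: algebra_simps power2_eq_square sum_distrib_left)

lemma sum_squares_le_square_sum:
  fixes y :: "nat \<Rightarrow> real"
  assumes "\<forall>i<d. 0 \<le> y i"
  shows "(\<Sum>i<d. (y i)\<^sup>2) \<le> (\<Sum>i<d. y i)\<^sup>2"
  using assms
proof (induction d)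
  case 0
  then show ?case by simp
next
  case (Suc d)
  have "0 \<le> y d * (\<Sum>i<d. y i)" using Suc.prems by (intro mult_nonneg_nonneg sum_nonneg) auto
  then show ?case using Suc by (simp add: power2_eq_square algebra_simps)
qed

text \<open>The hypothesis \<open>Im (u i) \<ge> 0\<close> gives \<open>\<Sum>i. (Im (u i))\<^sup>2 \<le> (Im (\<Sum>i. u i))\<^sup>2\<close>;
  the rest comes from \<open>\<bar>u\<bar>\<^sup>2 = Re (u\<^sup>2) + 2 (Im u)\<^sup>2\<close>.\<close>
lemma sum_norm_squares_le:
  assumes "\<forall>i<d. 0 \<le> Im (u i)"
  shows "(\<Sum>i<d. (cmod (u i))\<^sup>2) \<le> 3 * (cmod (\<Sum>i<d. u i))\<^sup>2 + 2 * cmod (elem_sym2 u d)"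
proof -
  have "(cmod z)\<^sup>2 = Re (z\<^sup>2) + 2 * (Im z)\<^sup>2" for z
    by (simp add: cmod_power2 Re_power2)
  then have "(\<Sum>i<d. (cmod (u i))\<^sup>2) = Re (\<Sum>i<d. (u i)\<^sup>2) + 2 * (\<Sum>i<d. (Im (u i))\<^sup>2)"
    by (simp add: sum.distrib sum_distrib_left)
  also have "Re (\<Sum>i<d. (u i)\<^sup>2) \<le> (cmod (\<Sum>i<d. u i))\<^sup>2 + 2 * cmod (elem_sym2 u d)"
    using complex_Re_le_cmod[of "\<Sum>i<d. (u i)\<^sup>2"] norm_triangle_ineq4[of "(\<Sum>i<d. u i)\<^sup>2" "2 * elem_sym2 u d"]
    unfolding sum_squares_elem_sym2 by (simp add: norm_power norm_mult)
  also have "(\<Sum>i<d. (Im (u i))\<^sup>2) \<le> (Im (\<Sum>i<d. u i))\<^sup>2"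
    using sum_squares_le_square_sum[of d "\<lambda>i. Im (u i)"] assms by (simp add: Im_sum)
  also have "(Im (\<Sum>i<d. u i))\<^sup>2 \<le> (cmod (\<Sum>i<d. u i))\<^sup>2"
    using abs_Im_le_cmod[of "\<Sum>i<d. u i"] by (simp add: abs_le_square_iff[symmetric])
  finally show ?thesis by simp
qed

lemma norm_one_minus_le_exp: "cmod (1 - x) \<le> exp (- Re x + (cmod x)\<^sup>2)"
proof -
  have "(cmod (1 - x))\<^sup>2 = 1 - 2 * Re x + (cmod x)\<^sup>2"
    unfolding cmod_power2 by (simp add: power2_eq_square algebra_simps)
  also have "\<dots> \<le> 1 + 2 * (- Re x + (cmod x)\<^sup>2)" by simp
  also have "\<dots> \<le> exp (2 * (- Re x + (cmod x)\<^sup>2))" by (rule exp_ge_add_one_self)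
  also have "\<dots> = (exp (- Re x + (cmod x)\<^sup>2))\<^sup>2" by (simp add: exp_double[symmetric])
  finally show ?thesis by (rule power2_le_imp_le) simp
qed

lemma norm_poly_root_prod_le:
  "cmod (poly (root_prod u d) s)
     \<le> exp (Re (- (\<Sum>i<d. u i) * s) + (\<Sum>i<d. (cmod (u i))\<^sup>2) * (cmod s)\<^sup>2)"
proof -
  have "cmod (poly (root_prod u d) s) = (\<Prod>i<d. cmod (1 - u i * s))"
    by (simp add: poly_root_prod prod_norm)
  also have "\<dots> \<le> (\<Prod>i<d. exp (- Re (u i * s) + (cmod (u i * s))\<^sup>2))"
    by (intro prod_mono conjI norm_one_minus_le_exp norm_ge_zero)
  also have "\<dots> = exp (\<Sum>i<d. - Re (u i * s) + (cmod (u i * s))\<^sup>2)" by (simp add: exp_sum)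
  also have "(\<Sum>i<d. - Re (u i * s) + (cmod (u i * s))\<^sup>2)
      = Re (- (\<Sum>i<d. u i) * s) + (\<Sum>i<d. (cmod (u i))\<^sup>2) * (cmod s)\<^sup>2"
  proof -
    have "- (\<Sum>i<d. u i) * s = (\<Sum>i<d. - (u i * s))" by (simp add: sum_distrib_right sum_negf)
    then have "Re (- (\<Sum>i<d. u i) * s) = (\<Sum>i<d. - Re (u i * s))"
      by (simp only: Re_sum uminus_complex.sel)
    moreover have "(\<Sum>i<d. (cmod (u i * s))\<^sup>2) = (\<Sum>i<d. (cmod (u i))\<^sup>2) * (cmod s)\<^sup>2"
      by (simp add: sum_distrib_right norm_mult power_mult_distrib)
    ultimately show ?thesis by (simp add: sum.distrib)
  qed
  finally show ?thesis .
qed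

text \<open>The growth of a stable polynomial is controlled by its first three coefficients alone,
  independently of its degree.\<close>
lemma stable_poly_growth_bound:
  assumes "stable_poly q" "poly q 0 \<noteq> 0"
  defines "a1 \<equiv> cmod (coeff q 1 / coeff q 0)" and "a2 \<equiv> cmod (coeff q 2 / coeff q 0)"
  shows "cmod (poly q s) \<le> cmod (coeff q 0) * exp (a1 * cmod s + (3 * a1\<^sup>2 + 2 * a2) * (cmod s)\<^sup>2)"
proof -
  obtain u d where u: "\<forall>i<d. 0 \<le> Im (u i)" and q: "q = smult (poly q 0) (root_prod u d)"
    using stable_poly_root_prod_factorization assms(1,2) by blast
  have c0: "coeff q 0 = poly q 0" by (simp add: poly_0_coeff_0)
  have "coeff q k = poly q 0 * coeff (root_prod u d) k" for k
    by (subst q) simp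
  then have a1: "a1 = cmod (\<Sum>i<d. u i)" and a2: "a2 = cmod (elem_sym2 u d)"
    using coeffs_root_prod[of u d] assms(2) unfolding a1_def a2_def by simp_all
  have "cmod (poly q s) = cmod (coeff q 0) * cmod (poly (root_prod u d) s)"
    by (subst q) (simp add: c0 norm_mult)
  also have "\<dots> \<le> cmod (coeff q 0)
      * exp (Re (- (\<Sum>i<d. u i) * s) + (\<Sum>i<d. (cmod (u i))\<^sup>2) * (cmod s)\<^sup>2)"
    by (intro mult_left_mono norm_poly_root_prod_le norm_ge_zero)
  also have "\<dots> \<le> cmod (coeff q 0) * exp (a1 * cmod s + (3 * a1\<^sup>2 + 2 * a2) * (cmod s)\<^sup>2)"
    unfolding a1 a2
  proof (intro mult_left_mono norm_ge_zero exp_mono add_mono mult_right_mono zero_le_power2)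
    show "Re (- (\<Sum>i<d. u i) * s) \<le> cmod (\<Sum>i<d. u i) * cmod s"
      using complex_Re_le_cmod[of "- (\<Sum>i<d. u i) * s"] by (simp add: norm_mult)
    show "(\<Sum>i<d. (cmod (u i))\<^sup>2) \<le> 3 * (cmod (\<Sum>i<d. u i))\<^sup>2 + 2 * cmod (elem_sym2 u d)"
      using u by (rule sum_norm_squares_le)
  qed
  finally show ?thesis .
qed

lemma stable_poly_uniform_bound:
  assumes "stable_poly q" "0 < \<delta>" "\<delta> \<le> cmod (coeff q 0)"
    and "\<And>k. k \<le> 2 \<Longrightarrow> cmod (coeff q k) \<le> M" and "cmod s \<le> B"
  defines "L \<equiv> M / \<delta>"
  shows "cmod (poly q s) \<le> M * exp (L * B + (3 * L\<^sup>2 + 2 * L) * B\<^sup>2)"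
proof -
  have q0: "poly q 0 \<noteq> 0" using assms(2,3) by (auto simp: poly_0_coeff_0)
  have ratio: "cmod (coeff q k / coeff q 0) \<le> L" if "k \<le> 2" for k
    using assms(2,3) assms(4)[OF that] unfolding L_def norm_divide
    by (intro frac_le) (auto intro: order_trans[OF norm_ge_zero])
  have "0 \<le> L" using ratio[of 0] norm_ge_zero order_trans by blast
  have "cmod (poly q s) \<le> cmod (coeff q 0) * exp (cmod (coeff q 1 / coeff q 0) * cmod s
      + (3 * (cmod (coeff q 1 / coeff q 0))\<^sup>2 + 2 * cmod (coeff q 2 / coeff q 0)) * (cmod s)\<^sup>2)"
    using stable_poly_growth_bound[OF assms(1) q0] by simp
  also have "\<dots> \<le> M * exp (L * B + (3 * L\<^sup>2 + 2 * L) * B\<^sup>2)"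
    using ratio[of 1] ratio[of 2] assms(4)[of 0] assms(5) \<open>0 \<le> L\<close>
    by (intro mult_mono exp_mono add_mono mult_mono power_mono) (auto intro: order_trans[OF norm_ge_zero])
  finally show ?thesis .
qed

section \<open>Cauchy estimates for coefficients\<close>

lemma power_series_coeff_bound:
  fixes e :: "nat \<Rightarrow> complex"
  assumes sums: "\<And>w. (\<lambda>k. e k * w ^ k) sums E w" and bound: "\<And>w. cmod w = 1 \<Longrightarrow> cmod (E w) \<le> B"
  shows "cmod (e k) \<le> B"
proof -
  define F where "F = Abs_fps e"
  have "ereal (norm (2::complex)) \<le> conv_radius e"
    by (rule conv_radius_geI) (use sums sums_summable in blast)
  then have radius: "ereal 2 \<le> fps_conv_radius F" by (simp add: F_def fps_conv_radius_def)
  have eval: "eval_fps F = E"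
    by (rule ext) (simp add: eval_fps_def F_def sums_unique[OF sums, symmetric])
  have "0 < fps_conv_radius F" using radius by (meson ereal_less(2) less_le_trans zero_less_numeral)
  then have ek: "e k = (deriv ^^ k) E 0 / fact k"
    using fps_nth_conv_deriv[of F k] unfolding eval by (simp add: F_def)
  have "cball (0::complex) 1 \<subseteq> eball 0 (fps_conv_radius F)"
    using radius by (auto simp: eball_def dist_norm intro: order.strict_trans2[of _ "ereal 2"])
  then have holo: "E holomorphic_on cball 0 1"
    unfolding eval[symmetric] by (rule holomorphic_on_eval_fps)
  have "norm ((deriv ^^ k) E 0) \<le> fact k * B / 1 ^ k"
  proof (rule Cauchy_inequality)
    show "E holomorphic_on ball 0 1" using holo ball_subset_cball by (rule holomorphic_on_subset)
    show "continuous_on (cball 0 1) E" using holo by (rule holomorphic_on_imp_continuous_on)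
  qed (use bound in auto)
  then show ?thesis unfolding ek by (simp add: norm_divide field_simps)
qed

lemma sums_poly_coeff: "(\<lambda>k. coeff p k * z ^ k) sums poly p (z::complex)"
proof -
  have "(\<lambda>k. coeff p k * z ^ k) sums (\<Sum>k\<le>degree p. coeff p k * z ^ k)"
    by (rule sums_finite) (auto simp: coeff_eq_0)
  then show ?thesis by (simp add: poly_altdef)
qed

lemma poly_coeff_bound:
  fixes p :: "complex poly"
  assumes "0 < r" and bound: "\<And>s. cmod s = r \<Longrightarrow> cmod (poly p s) \<le> B"
  shows "cmod (coeff p k) * r ^ k \<le> B"
proof -
  have "cmod (coeff p k * of_real r ^ k) \<le> B"
  proof (rule power_series_coeff_bound[where E = "\<lambda>w. poly p (of_real r * w)"])
    show "(\<lambda>k. coeff p k * of_real r ^ k * w ^ k) sums poly p (of_real r * w)" for w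
      using sums_poly_coeff[of p "of_real r * w"] by (simp add: power_mult_distrib mult.assoc)
    show "cmod (poly p (of_real r * w)) \<le> B" if "cmod w = 1" for w
      using that \<open>0 < r\<close> by (intro bound) (simp add: norm_mult)
  qed
  then show ?thesis using \<open>0 < r\<close> by (simp add: norm_mult norm_power)
qed

section \<open>Bivariate polynomials\<close>

text \<open>A bivariate polynomial is represented as a polynomial in \<open>w\<close> whose coefficients are
  polynomials in \<open>z\<close>.\<close>
definition poly2 :: "complex poly poly \<Rightarrow> complex \<Rightarrow> complex \<Rightarrow> complex" where
  "poly2 Q z w = poly (poly Q [:w:]) z"

lemma poly2_conv_map_poly: "poly2 Q z w = poly (map_poly (\<lambda>c. poly c z) Q) w"
  by (induction Q) (simp_all add: poly2_def map_poly_pCons)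

lemma degree_map_poly_poly_le: "degree (map_poly (\<lambda>c. poly c z) Q) \<le> degree Q"
  by (rule degree_le) (auto simp: coeff_map_poly coeff_eq_0)

lemma poly_eq_sum_atMost:
  fixes p :: "'a::comm_semiring_1 poly"
  assumes "degree p \<le> N"
  shows "poly p x = (\<Sum>i\<le>N. coeff p i * x ^ i)"
  unfolding poly_altdef using assms by (intro sum.mono_neutral_left) (auto simp: coeff_eq_0)

lemma poly2_eq_sum: "poly2 Q z w = (\<Sum>j\<le>degree Q. poly (coeff Q j) z * w ^ j)"
  unfolding poly2_conv_map_poly
  by (subst poly_eq_sum_atMost[OF degree_map_poly_poly_le]) (simp add: coeff_map_poly)

lemma sums_poly2: "(\<lambda>k. poly (coeff Q k) z * w ^ k) sums poly2 Q z w"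
  using sums_poly_coeff[of "map_poly (\<lambda>c. poly c z) Q" w]
  unfolding poly2_conv_map_poly by (simp add: coeff_map_poly)

lemma is_poly2_poly2: "is_poly2 (\<lambda>(z, w). poly2 Q z w)"
proof -
  define N where "N = Suc (degree Q + (\<Sum>j\<le>degree Q. degree (coeff Q j)))"
  have degree_coeff: "degree (coeff Q j) \<le> N - 1" for j
  proof (cases "j \<le> degree Q")
    case True
    then have "degree (coeff Q j) \<le> (\<Sum>j\<le>degree Q. degree (coeff Q j))"
      by (intro member_le_sum) auto
    then show ?thesis by (simp add: N_def)
  qed (simp add: coeff_eq_0 N_def)
  have atMost_N: "{..N - 1} = {..<N}" by (auto simp: N_def)
  have "poly2 Q z w = (\<Sum>i<N. \<Sum>j<N. coeff (coeff Q j) i * z ^ i * w ^ j)" for z w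
  proof -
    have "poly2 Q z w = (\<Sum>j<N. poly (coeff Q j) z * w ^ j)"
      unfolding poly2_conv_map_poly atMost_N[symmetric]
      by (subst poly_eq_sum_atMost[of _ "N - 1"])
        (auto simp: coeff_map_poly N_def intro: order.trans[OF degree_map_poly_poly_le])
    also have "\<dots> = (\<Sum>j<N. (\<Sum>i<N. coeff (coeff Q j) i * z ^ i) * w ^ j)"
      unfolding poly_eq_sum_atMost[OF degree_coeff] atMost_N ..
    also have "\<dots> = (\<Sum>i<N. \<Sum>j<N. coeff (coeff Q j) i * z ^ i * w ^ j)"
      by (subst sum.swap) (simp add: sum_distrib_right)
    finally show ?thesis .
  qed
  then show ?thesis
    unfolding is_poly2_def by (intro exI[of _ N] exI[of _ "\<lambda>i j. coeff (coeff Q j) i"]) simp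
qed

lemma is_poly2_iff_poly2: "is_poly2 f \<longleftrightarrow> (\<exists>Q. \<forall>z w. f (z, w) = poly2 Q z w)"
proof
  assume "is_poly2 f"
  then obtain N c where f: "\<And>z w. f (z, w) = (\<Sum>i<N. \<Sum>j<N. c i j * z ^ i * w ^ j)"
    unfolding is_poly2_def by blast
  define Q where "Q = (\<Sum>j<N. monom (\<Sum>i<N. monom (c i j) i) j)"
  have "f (z, w) = poly2 Q z w" for z w
  proof -
    have "poly2 Q z w = (\<Sum>j<N. (\<Sum>i<N. c i j * z ^ i) * w ^ j)"
      unfolding Q_def poly2_def by (simp add: poly_sum poly_monom poly_mult poly_power)
    also have "\<dots> = f (z, w)"
      unfolding f by (subst sum.swap) (simp add: sum_distrib_right)
    finally show ?thesis by simp
  qed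
  then show "\<exists>Q. \<forall>z w. f (z, w) = poly2 Q z w" by blast
next
  assume "\<exists>Q. \<forall>z w. f (z, w) = poly2 Q z w"
  then obtain Q where "f = (\<lambda>(z, w). poly2 Q z w)" by (auto simp: fun_eq_iff)
  then show "is_poly2 f" using is_poly2_poly2 by simp
qed

named_theorems is_poly2_intros

lemma is_poly2_const [is_poly2_intros]: "is_poly2 (\<lambda>x. c)"
  unfolding is_poly2_iff_poly2 by (intro exI[of _ "[:[:c:]:]"]) (simp add: poly2_def)

lemma is_poly2_poly_fst [is_poly2_intros]: "is_poly2 (\<lambda>x. poly p (fst x))"
  unfolding is_poly2_iff_poly2 by (intro exI[of _ "[:p:]"]) (simp add: poly2_def)

lemma is_poly2_snd [is_poly2_intros]: "is_poly2 (\<lambda>x. snd x)"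
  unfolding is_poly2_iff_poly2 by (intro exI[of _ "[:0, 1:]"]) (simp add: poly2_def)

lemma is_poly2_add [is_poly2_intros]: "is_poly2 f \<Longrightarrow> is_poly2 g \<Longrightarrow> is_poly2 (\<lambda>x. f x + g x)"
  unfolding is_poly2_iff_poly2 poly2_def by (metis poly_add)

lemma is_poly2_mult [is_poly2_intros]: "is_poly2 f \<Longrightarrow> is_poly2 g \<Longrightarrow> is_poly2 (\<lambda>x. f x * g x)"
  unfolding is_poly2_iff_poly2 poly2_def by (metis poly_mult)

lemma is_poly2_power [is_poly2_intros]: "is_poly2 f \<Longrightarrow> is_poly2 (\<lambda>x. f x ^ n)"
  by (induction n) (auto intro: is_poly2_const is_poly2_mult)

lemma is_poly2_sum [is_poly2_intros]:
  "(\<And>i. i \<in> A \<Longrightarrow> is_poly2 (f i)) \<Longrightarrow> is_poly2 (\<lambda>x. \<Sum>i\<in>A. f i x)"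
  by (induction A rule: infinite_finite_induct) (auto intro: is_poly2_const is_poly2_add)

lemma poly_eq_0_if_vanishes_on_open:
  fixes p :: "complex poly"
  assumes "open S" "S \<noteq> {}" "\<And>t. t \<in> S \<Longrightarrow> poly p t = 0"
  shows "p = 0"
proof (rule ccontr)
  assume "p \<noteq> 0"
  then have "finite {t. poly p t = 0}" by (rule poly_roots_finite)
  then have "finite S" using assms(3) by (meson finite_subset mem_Collect_eq subsetI)
  with assms(1,2) show False using finite_imp_not_open by blast
qed

definition zero_free_uhp2 :: "(complex \<times> complex \<Rightarrow> complex) \<Rightarrow> bool" where
  "zero_free_uhp2 f \<longleftrightarrow> (\<forall>z w. 0 < Im z \<longrightarrow> 0 < Im w \<longrightarrow> f (z, w) \<noteq> 0)"

definition vanishes_uhp2 :: "(complex \<times> complex \<Rightarrow> complex) \<Rightarrow> bool" where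
  "vanishes_uhp2 f \<longleftrightarrow> (\<forall>z w. 0 < Im z \<longrightarrow> 0 < Im w \<longrightarrow> f (z, w) = 0)"

lemma uhp_nonempty: "{t::complex. 0 < Im t} \<noteq> {}"
  by (metis complex.sel(2) empty_iff mem_Collect_eq zero_less_one)

lemma is_poly2_vanishes_uhp2_imp_zero:
  assumes "is_poly2 f" "vanishes_uhp2 f"
  shows "f = (\<lambda>_. 0)"
proof -
  obtain Q where Q: "\<And>z w. f (z, w) = poly2 Q z w" using assms(1) is_poly2_iff_poly2 by blast
  have "map_poly (\<lambda>c. poly c z) Q = 0" if "0 < Im z" for z
    using that assms(2) uhp_nonempty
    by (intro poly_eq_0_if_vanishes_on_open[OF open_halfspace_Im_gt])
      (auto simp: vanishes_uhp2_def Q poly2_conv_map_poly)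
  then have "poly (poly Q [:w:]) t = 0" if "0 < Im t" for t w
    using poly2_conv_map_poly[of Q t w] that unfolding poly2_def by simp
  then have "poly Q [:w:] = 0" for w
    using uhp_nonempty by (intro poly_eq_0_if_vanishes_on_open[OF open_halfspace_Im_gt]) auto
  then show ?thesis by (auto simp: fun_eq_iff Q poly2_def)
qed

lemma H2_iff_zero_free_uhp2: "is_poly2 f \<Longrightarrow> H2 f \<longleftrightarrow> zero_free_uhp2 f"
  unfolding H2_def zero_free_uhp2_def by (metis complex.sel(2) zero_less_one)

lemma H2_or_zero_if_zero_free_or_vanishes:
  "is_poly2 f \<Longrightarrow> zero_free_uhp2 f \<or> vanishes_uhp2 f \<Longrightarrow> H2 f \<or> f = (\<lambda>_. 0)"
  using H2_iff_zero_free_uhp2 is_poly2_vanishes_uhp2_imp_zero by blast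

section \<open>Hurwitz's theorem in two variables\<close>

lemma uniform_limit_slice_snd:
  assumes "\<And>K. compact K \<Longrightarrow> uniform_limit K f F sequentially" "compact K"
  shows "uniform_limit K (\<lambda>n w. f n (z, w)) (\<lambda>w. F (z, w)) sequentially"
proof -
  have "uniform_limit ({z} \<times> K) f F sequentially" using assms by (simp add: compact_Times)
  then show ?thesis by (rule uniform_limit_compose') auto
qed

lemma uniform_limit_slice_fst:
  assumes "\<And>K. compact K \<Longrightarrow> uniform_limit K f F sequentially" "compact K"
  shows "uniform_limit K (\<lambda>n z. f n (z, w)) (\<lambda>z. F (z, w)) sequentially"
proof -
  have "uniform_limit (K \<times> {w}) f F sequentially" using assms by (simp add: compact_Times)
  then show ?thesis by (rule uniform_limit_compose') auto
qed

lemma uniform_limit_shift: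
  "uniform_limit K f F sequentially \<Longrightarrow> uniform_limit K (\<lambda>n. f (n + N)) F sequentially"
  by (rule filterlim_compose[OF _ filterlim_add_const_nat_at_top])

lemma Hurwitz_uhp:
  assumes "\<And>K. compact K \<Longrightarrow> uniform_limit K h g sequentially"
    and "\<And>n. h n holomorphic_on {t. 0 < Im t}" "g holomorphic_on {t. 0 < Im t}"
    and "\<And>n t. 0 < Im t \<Longrightarrow> h n t \<noteq> 0" "0 < Im a" "g a = 0"
  shows "g constant_on {t. 0 < Im t}"
proof (rule ccontr)
  assume "\<not> g constant_on {t. 0 < Im t}"
  then have "g a \<noteq> 0"
    using assms open_halfspace_Im_gt convex_connected[OF convex_halfspace_Im_gt]
    by (intro Hurwitz_no_zeros[of "{t. 0 < Im t}" h g a]) simp_all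
  with assms(6) show False by simp
qed

text \<open>A zero \<open>(z\<^sub>0, w\<^sub>0)\<close> of \<open>F\<close> forces \<open>F(z\<^sub>0, \<cdot>) = 0\<close> by Hurwitz's theorem in \<open>w\<close>, hence
  \<open>F(\<cdot>, w) = 0\<close> for every \<open>w\<close> by Hurwitz's theorem in \<open>z\<close>.\<close>
lemma Hurwitz_uhp2:
  assumes lim: "\<And>K. compact K \<Longrightarrow> uniform_limit K f F sequentially"
    and holo_f: "\<And>n z. (\<lambda>w. f n (z, w)) holomorphic_on {t. 0 < Im t}"
      "\<And>n w. (\<lambda>z. f n (z, w)) holomorphic_on {t. 0 < Im t}"
    and holo_F: "\<And>z. (\<lambda>w. F (z, w)) holomorphic_on {t. 0 < Im t}"
      "\<And>w. (\<lambda>z. F (z, w)) holomorphic_on {t. 0 < Im t}"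
    and zero_free: "\<And>n. zero_free_uhp2 (f n)"
  shows "zero_free_uhp2 F \<or> vanishes_uhp2 F"
proof (rule disjCI)
  assume "\<not> vanishes_uhp2 F"
  then obtain z1 w1 where zw1: "0 < Im z1" "0 < Im w1" "F (z1, w1) \<noteq> 0"
    unfolding vanishes_uhp2_def by blast
  show "zero_free_uhp2 F"
    unfolding zero_free_uhp2_def
  proof (intro allI impI notI)
    fix z0 w0 assume zw0: "0 < Im z0" "0 < Im w0" "F (z0, w0) = 0"
    have "(\<lambda>w. F (z0, w)) constant_on {t. 0 < Im t}"
    proof (rule Hurwitz_uhp[where h = "\<lambda>n w. f n (z0, w)" and a = w0])
      show "uniform_limit K (\<lambda>n w. f n (z0, w)) (\<lambda>w. F (z0, w)) sequentially" if "compact K" for K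
        using lim that by (rule uniform_limit_slice_snd)
    qed (use holo_f holo_F zero_free zw0 in \<open>auto simp: zero_free_uhp2_def\<close>)
    then have "F (z0, w1) = 0" using zw0 zw1 unfolding constant_on_def by force
    have "(\<lambda>z. F (z, w1)) constant_on {t. 0 < Im t}"
    proof (rule Hurwitz_uhp[where h = "\<lambda>n z. f n (z, w1)" and a = z0])
      show "uniform_limit K (\<lambda>n z. f n (z, w1)) (\<lambda>z. F (z, w1)) sequentially" if "compact K" for K
        using lim that by (rule uniform_limit_slice_fst)
    qed (use holo_f holo_F zero_free zw0 zw1 \<open>F (z0, w1) = 0\<close> in \<open>auto simp: zero_free_uhp2_def\<close>)
    then have "F (z1, w1) = 0" using zw0 zw1 \<open>F (z0, w1) = 0\<close> unfolding constant_on_def by force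
    with zw1 show False by simp
  qed
qed

lemma Hurwitz_uhp2_dichotomy:
  assumes lim: "\<And>K. compact K \<Longrightarrow> uniform_limit K f F sequentially"
    and holo_f: "\<And>n z. (\<lambda>w. f n (z, w)) holomorphic_on {t. 0 < Im t}"
      "\<And>n w. (\<lambda>z. f n (z, w)) holomorphic_on {t. 0 < Im t}"
    and holo_F: "\<And>z. (\<lambda>w. F (z, w)) holomorphic_on {t. 0 < Im t}"
      "\<And>w. (\<lambda>z. F (z, w)) holomorphic_on {t. 0 < Im t}"
    and dichotomy: "\<And>n. zero_free_uhp2 (f n) \<or> vanishes_uhp2 (f n)"
  shows "zero_free_uhp2 F \<or> vanishes_uhp2 F"
proof (cases "\<exists>N. \<forall>n\<ge>N. zero_free_uhp2 (f n)")
  case True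
  then obtain N where "\<forall>n\<ge>N. zero_free_uhp2 (f n)" by blast
  then have "\<And>n. zero_free_uhp2 (f (n + N))" by simp
  then show ?thesis
    using lim holo_f holo_F by (intro Hurwitz_uhp2[where f = "\<lambda>n. f (n + N)"] uniform_limit_shift)
next
  case False
  then have frequently_vanishing: "\<exists>n\<ge>M. vanishes_uhp2 (f n)" for M
    using dichotomy by blast
  have "F (z, w) = 0" if "0 < Im z" "0 < Im w" for z w
  proof (rule ccontr)
    assume "F (z, w) \<noteq> 0"
    have "(\<lambda>n. f n (z, w)) \<longlonglongrightarrow> F (z, w)"
      using tendsto_uniform_limitI[OF lim[of "{(z, w)}"]] by simp
    then have "eventually (\<lambda>n. f n (z, w) \<noteq> 0) sequentially"
      using \<open>F (z, w) \<noteq> 0\<close> by (rule tendsto_imp_eventually_ne)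
    then obtain M where "\<And>n. n \<ge> M \<Longrightarrow> f n (z, w) \<noteq> 0"
      unfolding eventually_sequentially by blast
    with frequently_vanishing[of M] that show False unfolding vanishes_uhp2_def by blast
  qed
  then show ?thesis unfolding vanishes_uhp2_def by blast
qed

section \<open>Jensen polynomials\<close>

definition jensen :: "(nat \<Rightarrow> complex poly) \<Rightarrow> nat \<Rightarrow> complex \<Rightarrow> complex \<Rightarrow> complex" where
  "jensen P n z w = (\<Sum>k\<le>n. of_nat (falling n k) * poly (P k) z * w ^ k)"

lemma is_poly2_jensen: "is_poly2 (\<lambda>(z, w). jensen P n z w)"
  unfolding jensen_def case_prod_unfold by (intro is_poly2_intros)

lemma falling_Suc: "falling n (Suc k) = falling n k * (n - k)"
  by (simp add: falling_def)

lemma falling_eq_binomial_fact: "falling n k = (n choose k) * fact k"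
proof (induction n arbitrary: k)
  case 0
  then show ?case by (cases k) (simp_all add: falling_def)
next
  case (Suc n)
  show ?case
  proof (cases k)
    case 0
    then show ?thesis by (simp add: falling_def)
  next
    case (Suc j)
    have "falling (Suc n) (Suc j) = Suc n * falling n j"
      unfolding falling_def prod.lessThan_Suc_shift by simp
    also have "\<dots> = (Suc n choose Suc j) * fact (Suc j)"
      using Suc.IH Suc_times_binomial_eq[of n j] by (simp add: algebra_simps)
    finally show ?thesis using Suc by simp
  qed
qed

lemma coeff_0_higher_pderiv: "coeff ((pderiv ^^ k) p) 0 = fact k * coeff p k"
proof (induction k arbitrary: p)
  case 0
  then show ?case by simp
next
  case (Suc k)
  then show ?case by (simp add: funpow_Suc_right coeff_pderiv algebra_simps del: funpow.simps)
qed

lemma higher_pderiv_map_poly_poly: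
  "(pderiv ^^ k) (map_poly (\<lambda>c. poly c z) Q) = map_poly (\<lambda>c. poly c z) ((pderiv ^^ k) Q)"
proof -
  have "pderiv (map_poly (\<lambda>c. poly c z) Q) = map_poly (\<lambda>c. poly c z) (pderiv Q)" for Q
    by (rule poly_eqI) (simp add: coeff_pderiv coeff_map_poly)
  then show ?thesis by (induction k) simp_all
qed

text \<open>Applying \<open>(1 + w \<partial>\<^sub>s)\<^sup>n\<close> to \<open>s \<mapsto> Q(z, s)\<close> and evaluating at \<open>s = d w\<close>
  gives polynomials that are zero-free on the product of upper half-planes for \<open>d > 0\<close>, and
  the Jensen polynomial of \<open>Q\<close> for \<open>d = 0\<close>.\<close>
definition laguerre_deformation :: "complex poly poly \<Rightarrow> nat \<Rightarrow> real \<Rightarrow> complex \<Rightarrow> complex \<Rightarrow> complex" where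
  "laguerre_deformation Q n d z w =
     poly ((laguerre_op w ^^ n) (map_poly (\<lambda>c. poly c z) Q)) (of_real d * w)"

lemma laguerre_deformation_eq_sum:
  "laguerre_deformation Q n d z w =
     (\<Sum>k\<le>n. of_nat (n choose k) * w ^ k * poly2 ((pderiv ^^ k) Q) z (of_real d * w))"
  unfolding laguerre_deformation_def funpow_laguerre_op_eq
  by (simp add: poly_sum higher_pderiv_map_poly_poly poly2_conv_map_poly)

lemma laguerre_deformation_0: "laguerre_deformation Q n 0 z w = jensen (coeff Q) n z w"
proof -
  have "poly (fact k) z = (fact k :: complex)" for k by (metis of_nat_fact poly_of_nat)
  then have "poly2 ((pderiv ^^ k) Q) z 0 = fact k * poly (coeff Q k) z" for k
    by (simp add: poly2_conv_map_poly poly_0_coeff_0 coeff_map_poly coeff_0_higher_pderiv)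
  then show ?thesis
    unfolding laguerre_deformation_eq_sum jensen_def
    by (intro sum.cong refl) (simp add: falling_eq_binomial_fact mult_ac)
qed

lemma laguerre_deformation_nonzero:
  assumes "\<And>z w. 0 < Im z \<Longrightarrow> 0 < Im w \<Longrightarrow> poly2 Q z w \<noteq> 0"
    and "0 < d" "0 < Im z" "0 < Im w"
  shows "laguerre_deformation Q n d z w \<noteq> 0"
proof -
  have "stable_poly (map_poly (\<lambda>c. poly c z) Q)"
    unfolding stable_poly_def using assms(1,3) by (simp flip: poly2_conv_map_poly)
  then have "stable_poly ((laguerre_op w ^^ n) (map_poly (\<lambda>c. poly c z) Q))"
    using assms(4) by (rule stable_poly_funpow_laguerre_op)
  moreover have "0 < Im (of_real d * w)" using assms(2,4) by simp
  ultimately show ?thesis unfolding laguerre_deformation_def stable_poly_def by blast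
qed

lemma uniform_limit_param_to_zero:
  fixes \<Phi> :: "real \<times> 'a::metric_space \<Rightarrow> 'b::metric_space"
  assumes "continuous_on UNIV \<Phi>" "compact K"
  shows "uniform_limit K (\<lambda>j x. \<Phi> (1 / real (Suc j), x)) (\<lambda>x. \<Phi> (0, x)) sequentially"
proof -
  have "uniformly_continuous_on ({0..1} \<times> K) \<Phi>"
    using assms by (intro compact_uniformly_continuous compact_Times) (auto intro: continuous_on_subset)
  show ?thesis unfolding uniform_limit_iff
  proof (intro allI impI)
    fix e :: real assume "0 < e"
    then obtain d where d: "0 < d"
      "\<And>x x'. x \<in> {0..1} \<times> K \<Longrightarrow> x' \<in> {0..1} \<times> K \<Longrightarrow> dist x' x < d \<Longrightarrow> dist (\<Phi> x') (\<Phi> x) < e"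
      using \<open>uniformly_continuous_on ({0..1} \<times> K) \<Phi>\<close> unfolding uniformly_continuous_on_def by metis
    have "\<forall>\<^sub>F j in sequentially. 1 / real (Suc j) < d"
      using \<open>0 < d\<close> LIMSEQ_inverse_real_of_nat order_tendstoD(2) by (simp add: inverse_eq_divide) blast
    then show "\<forall>\<^sub>F j in sequentially. \<forall>x\<in>K. dist (\<Phi> (1 / real (Suc j), x)) (\<Phi> (0, x)) < e"
      by eventually_elim (auto intro!: d(2) simp: dist_Pair_Pair)
  qed
qed

lemma jensen_zero_free_or_vanishes:
  assumes "\<And>z w. 0 < Im z \<Longrightarrow> 0 < Im w \<Longrightarrow> poly2 Q z w \<noteq> 0"
  shows "zero_free_uhp2 (\<lambda>(z, w). jensen (coeff Q) n z w) \<or> vanishes_uhp2 (\<lambda>(z, w). jensen (coeff Q) n z w)"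
proof -
  define \<Phi> where "\<Phi> = (\<lambda>(d, z, w). laguerre_deformation Q n d z w)"
  have cont: "continuous_on UNIV \<Phi>"
    unfolding \<Phi>_def laguerre_deformation_eq_sum case_prod_unfold poly2_eq_sum
    by (intro continuous_intros)
  have lim: "uniform_limit K (\<lambda>j. \<lambda>(z, w). laguerre_deformation Q n (1 / real (Suc j)) z w)
      (\<lambda>(z, w). jensen (coeff Q) n z w) sequentially" if "compact K" for K
    using uniform_limit_param_to_zero[OF cont that]
    by (simp add: \<Phi>_def laguerre_deformation_0[abs_def])
  have [simp]: "1 + of_nat j \<noteq> (0::complex)" for j
    by (metis of_nat_Suc of_nat_eq_0_iff add.commute nat.distinct(1))
  show ?thesis
  proof (rule Hurwitz_uhp2[OF lim])
    show "zero_free_uhp2 (\<lambda>(z, w). laguerre_deformation Q n (1 / real (Suc j)) z w)" for j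
      using laguerre_deformation_nonzero[OF assms] by (simp add: zero_free_uhp2_def)
  qed (auto simp: laguerre_deformation_eq_sum jensen_def poly2_eq_sum intro!: holomorphic_intros)
qed

lemma uniform_limit_power_series_coeff:
  fixes a :: "nat \<Rightarrow> nat \<Rightarrow> 'a \<Rightarrow> complex" and b :: "nat \<Rightarrow> 'a \<Rightarrow> complex"
  assumes "\<And>m z w. (\<lambda>k. a m k z * w ^ k) sums f m (z, w)"
    and "\<And>z w. (\<lambda>k. b k z * w ^ k) sums g (z, w)"
    and "uniform_limit (A \<times> sphere 0 1) f g sequentially"
  shows "uniform_limit A (\<lambda>m. a m k) (b k) sequentially"
proof (rule uniform_limitI)
  fix e :: real assume "0 < e"
  then have "\<forall>\<^sub>F m in sequentially. \<forall>x\<in>A \<times> sphere 0 1. dist (f m x) (g x) < e / 2"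
    using uniform_limitD[OF assms(3), of "e / 2"] by simp
  then show "\<forall>\<^sub>F m in sequentially. \<forall>z\<in>A. dist (a m k z) (b k z) < e"
  proof eventually_elim
    case (elim m)
    show ?case
    proof
      fix z assume "z \<in> A"
      have "cmod (a m k z - b k z) \<le> e / 2"
      proof (rule power_series_coeff_bound)
        show "(\<lambda>k. (a m k z - b k z) * w ^ k) sums (f m (z, w) - g (z, w))" for w
          using sums_diff[OF assms(1,2)] by (simp add: algebra_simps)
        show "cmod (f m (z, w) - g (z, w)) \<le> e / 2" if "cmod w = 1" for w
          using elim \<open>z \<in> A\<close> that by (auto simp: dist_norm less_imp_le)
      qed
      then show "dist (a m k z) (b k z) < e" using \<open>0 < e\<close> by (simp add: dist_norm)
    qed
  qed
qed

lemma uniform_limit_sum: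
  fixes f :: "'i \<Rightarrow> nat \<Rightarrow> 'a \<Rightarrow> 'b::real_normed_vector"
  assumes "finite I" "\<And>i. i \<in> I \<Longrightarrow> uniform_limit S (f i) (g i) F"
  shows "uniform_limit S (\<lambda>n x. \<Sum>i\<in>I. f i n x) (\<lambda>x. \<Sum>i\<in>I. g i x) F"
  using assms by (induction I rule: finite_induct) (auto intro: uniform_limit_add uniform_limit_const)

lemma bounded_continuous_image:
  "compact K \<Longrightarrow> continuous_on K f \<Longrightarrow> bounded (f ` K)"
  by (simp add: compact_continuous_image compact_imp_bounded)

lemma jensen_uniform_limit:
  assumes p_eq: "\<And>m z w. p m (z, w) = poly2 (Q m) z w"
    and sums: "\<And>z w. (\<lambda>k. poly (P k) z * w ^ k) sums G (z, w)"
    and lim: "\<And>K. compact K \<Longrightarrow> uniform_limit K p G sequentially"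
    and "compact K"
  shows "uniform_limit K (\<lambda>m (z, w). jensen (coeff (Q m)) n z w) (\<lambda>(z, w). jensen P n z w) sequentially"
proof -
  obtain R where R: "\<And>x. x \<in> K \<Longrightarrow> norm x \<le> R"
    using compact_imp_bounded[OF \<open>compact K\<close>] unfolding bounded_iff by blast
  have "uniform_limit (cball 0 R) (\<lambda>m z. poly (coeff (Q m) k) z) (\<lambda>z. poly (P k) z) sequentially" for k
    using sums_poly2 sums lim[of "cball 0 R \<times> sphere 0 1"]
    by (intro uniform_limit_power_series_coeff[where f = p]) (auto simp: p_eq compact_Times)
  then have "uniform_limit K (\<lambda>m x. poly (coeff (Q m) k) (fst x)) (\<lambda>x. poly (P k) (fst x)) sequentially" for k
    by (rule uniform_limit_compose') (use R norm_fst_le order_trans in fastforce)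
  then have "uniform_limit K (\<lambda>m x. poly (coeff (Q m) k) (fst x) * (of_nat (falling n k) * snd x ^ k))
      (\<lambda>x. poly (P k) (fst x) * (of_nat (falling n k) * snd x ^ k)) sequentially" for k
    using \<open>compact K\<close>
    by (intro uniform_lim_mult uniform_limit_const bounded_continuous_image continuous_intros)
  then show ?thesis
    unfolding jensen_def case_prod_unfold
    by (intro uniform_limit_sum) (simp_all add: mult_ac)
qed

lemma H2bar_imp_jensen_H2_or_zero:
  assumes sums: "\<And>z w. (\<lambda>k. poly (P k) z * w ^ k) sums G (z, w)" and "H2bar G"
  shows "H2 (\<lambda>(z, w). jensen P n z w) \<or> (\<lambda>(z, w). jensen P n z w) = (\<lambda>_. 0)"
proof (rule H2_or_zero_if_zero_free_or_vanishes[OF is_poly2_jensen])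
  obtain p where H2: "\<And>m. H2 (p m)" and lim: "\<And>K. compact K \<Longrightarrow> uniform_limit K p G sequentially"
    using \<open>H2bar G\<close> unfolding H2bar_def by blast
  then obtain Q where Q: "\<And>m z w. p m (z, w) = poly2 (Q m) z w"
    unfolding H2_def is_poly2_iff_poly2 by metis
  show "zero_free_uhp2 (\<lambda>(z, w). jensen P n z w) \<or> vanishes_uhp2 (\<lambda>(z, w). jensen P n z w)"
  proof (rule Hurwitz_uhp2_dichotomy[where f = "\<lambda>m (z, w). jensen (coeff (Q m)) n z w"])
    show "uniform_limit K (\<lambda>m (z, w). jensen (coeff (Q m)) n z w) (\<lambda>(z, w). jensen P n z w) sequentially"
      if "compact K" for K
      using Q sums lim that by (rule jensen_uniform_limit)
    show "zero_free_uhp2 (\<lambda>(z, w). jensen (coeff (Q m)) n z w) \<or> vanishes_uhp2 (\<lambda>(z, w). jensen (coeff (Q m)) n z w)" for m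
      using H2[of m] by (intro jensen_zero_free_or_vanishes) (auto simp: H2_def Q)
  qed (auto simp: jensen_def intro!: holomorphic_intros)
qed

section \<open>Scaled Jensen polynomials\<close>

definition falling_ratio :: "nat \<Rightarrow> nat \<Rightarrow> real" where
  "falling_ratio n k = real (falling n k) / real n ^ k"

lemma falling_eq_0: "n < k \<Longrightarrow> falling n k = 0"
  unfolding falling_def by (auto intro!: prod_zero bexI[of _ n])

lemma falling_ratio_0 [simp]: "falling_ratio n 0 = 1"
  by (simp add: falling_ratio_def falling_def)

lemma falling_ratio_eq_0: "n < k \<Longrightarrow> falling_ratio n k = 0"
  by (simp add: falling_ratio_def falling_eq_0)

lemma falling_ratio_Suc: "1 \<le> n \<Longrightarrow> falling_ratio n (Suc k) = falling_ratio n k * (real (n - k) / real n)"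
  by (simp add: falling_ratio_def falling_Suc field_simps)

lemma falling_ratio_bounds:
  assumes "1 \<le> n"
  shows "0 \<le> falling_ratio n k \<and> falling_ratio n k \<le> 1 \<and> 1 - falling_ratio n k \<le> real k ^ 2 / real n"
proof (induction k)
  case 0
  then show ?case by simp
next
  case (Suc k)
  have n: "1 \<le> real n" using assms by simp
  show ?case
  proof (cases "n \<le> k")
    case True
    then have "real n \<le> real (Suc k)" by simp
    also have "\<dots> \<le> real (Suc k) ^ 2" by (simp add: power2_eq_square)
    finally have "real n \<le> real (Suc k) ^ 2" .
    then show ?thesis using n True by (simp add: falling_ratio_eq_0 field_simps)
  next
    case False
    define c where "c = falling_ratio n k"
    have step: "falling_ratio n (Suc k) = c * (1 - real k / real n)"
      using False n unfolding falling_ratio_Suc[OF assms] c_def by (simp add: of_nat_diff field_simps)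
    have c: "0 \<le> c" "c \<le> 1" "1 - c \<le> real k ^ 2 / real n" using Suc c_def by auto
    have kn: "0 \<le> 1 - real k / real n" "1 - real k / real n \<le> 1" using False n by (auto simp: field_simps)
    have "1 - c * (1 - real k / real n) = (1 - c) + c * (real k / real n)" by (simp add: algebra_simps)
    also have "\<dots> \<le> real k ^ 2 / real n + real k / real n"
      using c mult_left_le_one_le[of "real k / real n" c] by (intro add_mono) auto
    also have "\<dots> \<le> real (Suc k) ^ 2 / real n"
      using n by (simp add: field_simps power2_eq_square)
    finally show ?thesis unfolding step using c kn by (auto intro: mult_le_one)
  qed
qed

lemma tendsto_falling_ratio: "(\<lambda>n. falling_ratio n k) \<longlonglongrightarrow> 1"
proof (rule real_tendsto_sandwich[where f = "\<lambda>n. 1 - real k ^ 2 / real n" and h = "\<lambda>n. 1"])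
  show "\<forall>\<^sub>F n in sequentially. 1 - real k ^ 2 / real n \<le> falling_ratio n k"
    using falling_ratio_bounds eventually_sequentially by (metis (no_types, lifting) diff_le_eq add.commute)
  show "\<forall>\<^sub>F n in sequentially. falling_ratio n k \<le> 1"
    using falling_ratio_bounds eventually_sequentially by metis
  show "(\<lambda>n. 1 - real k ^ 2 / real n) \<longlonglongrightarrow> 1"
    by (rule tendsto_eq_intros lim_const_over_n | simp)+
qed simp

definition scaled_jensen :: "(nat \<Rightarrow> complex poly) \<Rightarrow> nat \<Rightarrow> complex \<Rightarrow> complex \<Rightarrow> complex" where
  "scaled_jensen P n z w = (\<Sum>k\<le>n. of_real (falling_ratio n k) * poly (P k) z * w ^ k)"

lemma scaled_jensen_eq_jensen: "1 \<le> n \<Longrightarrow> scaled_jensen P n z w = jensen P n z (w / of_nat n)"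
  unfolding scaled_jensen_def jensen_def falling_ratio_def
  by (intro sum.cong refl) (simp add: power_divide field_simps)

lemma sums_scaled_jensen: "(\<lambda>k. of_real (falling_ratio n k) * poly (P k) z * w ^ k) sums scaled_jensen P n z w"
  unfolding scaled_jensen_def by (rule sums_finite) (auto simp: falling_ratio_eq_0)

lemma is_poly2_scaled_jensen: "is_poly2 (\<lambda>x. snd x ^ m * scaled_jensen P n (fst x) (snd x))"
  unfolding scaled_jensen_def by (intro is_poly2_intros)

definition line_poly :: "(nat \<Rightarrow> complex poly) \<Rightarrow> nat \<Rightarrow> complex \<Rightarrow> real \<Rightarrow> complex poly" where
  "line_poly P n z0 a = (\<Sum>k\<le>n. smult (of_real (falling_ratio n k)) (monom 1 k * pcompose (P k) [:z0, of_real a:]))"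

lemma poly_line_poly: "poly (line_poly P n z0 a) s = scaled_jensen P n (z0 + of_real a * s) s"
  unfolding line_poly_def scaled_jensen_def by (simp add: poly_sum poly_pcompose poly_monom algebra_simps)

lemma coeff_0_line_poly: "coeff (line_poly P n z0 a) 0 = poly (P 0) z0"
  unfolding poly_0_coeff_0[symmetric] poly_line_poly by (simp add: scaled_jensen_def)

lemma norm_coeff_line_poly_le:
  assumes "1 \<le> n" and M: "\<And>k i. k \<le> j \<Longrightarrow> cmod (coeff (pcompose (P k) [:z0, of_real a:]) i) \<le> M"
  shows "cmod (coeff (line_poly P n z0 a) j) \<le> real (Suc j) * M"
proof -
  define c where "c k = coeff (pcompose (P k) [:z0, of_real a:]) (j - k)" for k
  have "0 \<le> M" using M[of 0 0] norm_ge_zero order_trans by blast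
  have "coeff (line_poly P n z0 a) j = (\<Sum>k\<le>n. if k \<in> {..j} then of_real (falling_ratio n k) * c k else 0)"
    unfolding line_poly_def c_def by (auto simp: coeff_sum coeff_monom_mult intro!: sum.cong)
  also have "\<dots> = (\<Sum>k\<in>{..n} \<inter> {..j}. of_real (falling_ratio n k) * c k)"
    by (rule sum.inter_restrict[symmetric]) simp
  also have "cmod \<dots> \<le> (\<Sum>k\<in>{..n} \<inter> {..j}. cmod (of_real (falling_ratio n k) * c k))"
    by (rule norm_sum)
  also have "\<dots> \<le> (\<Sum>k\<in>{..n} \<inter> {..j}. M)"
    using falling_ratio_bounds[OF assms(1)] M unfolding c_def
    by (intro sum_mono) (auto simp: norm_mult intro: order.trans[OF mult_left_le_one_le])
  also have "\<dots> \<le> (\<Sum>k\<le>j. M)" using \<open>0 \<le> M\<close> by (intro sum_mono2) auto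
  finally show ?thesis by simp
qed

lemma poly_family_bounded_cball:
  assumes "finite A"
  obtains M where "0 \<le> M" "\<And>k z. k \<in> A \<Longrightarrow> cmod z \<le> r \<Longrightarrow> cmod (poly (P k) z) \<le> M"
proof -
  have "bounded (\<Union>k\<in>A. poly (P k) ` cball 0 r)"
    using assms by (intro bounded_UN ballI compact_imp_bounded compact_continuous_image continuous_intros) auto
  then obtain M where "0 < M" and M: "\<And>y. y \<in> (\<Union>k\<in>A. poly (P k) ` cball 0 r) \<Longrightarrow> norm y \<le> M"
    unfolding bounded_pos by blast
  have "cmod (poly (P k) z) \<le> M" if "k \<in> A" "cmod z \<le> r" for k z
    using that by (intro M UN_I imageI) (auto simp: dist_norm)
  with \<open>0 < M\<close> show ?thesis by (intro that[of M]) auto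
qed

lemma continuous_nonzero_bounded_below:
  fixes f :: "'a::metric_space \<Rightarrow> 'b::real_normed_vector"
  assumes "compact S" "continuous_on S f" "\<And>z. z \<in> S \<Longrightarrow> f z \<noteq> 0"
  obtains \<delta> where "0 < \<delta>" "\<And>z. z \<in> S \<Longrightarrow> \<delta> \<le> norm (f z)"
proof (cases "S = {}")
  case False
  obtain x where "x \<in> S" "\<And>y. y \<in> S \<Longrightarrow> norm (f x) \<le> norm (f y)"
    using continuous_attains_inf[OF assms(1) False continuous_on_norm[OF assms(2)]] by blast
  then show ?thesis using assms(3) by (intro that[of "norm (f x)"]) auto
qed (use that[of 1] in auto)

lemma norm_coeff_pcompose_line_le:
  assumes "\<And>z. cmod z \<le> B1 + A \<Longrightarrow> cmod (poly p z) \<le> M" "cmod z0 \<le> B1" "0 \<le> a" "a \<le> A"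
  shows "cmod (coeff (pcompose p [:z0, of_real a:]) i) \<le> M"
proof -
  have "cmod (coeff (pcompose p [:z0, of_real a:]) i) * 1 ^ i \<le> M"
  proof (rule poly_coeff_bound)
    fix t :: complex assume "cmod t = 1"
    then have "cmod (z0 + of_real a * t) \<le> B1 + A"
      using assms(2-4) norm_triangle_ineq[of z0 "of_real a * t"] by (simp add: norm_mult)
    then show "cmod (poly (pcompose p [:z0, of_real a:]) t) \<le> M"
      using assms(1) by (simp add: poly_pcompose algebra_simps)
  qed simp
  then show ?thesis by simp
qed

lemma quadratic_disc_off_strip:
  fixes z w s :: complex
  assumes "cmod z \<le> R" "cmod w \<le> R" "cmod s = 1"
  defines "L \<equiv> 2 * R + 2"
  defines "z' \<equiv> z + \<i> * of_real L * s - \<i> * of_real (L / 2) * s\<^sup>2"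
    and "w' \<equiv> w + \<i> * of_real L * s + \<i> * of_real (L / 2) * s\<^sup>2"
  shows "cmod z' \<le> R + 2 * L" "cmod w' \<le> R + 2 * L" "1 \<le> Im z' \<or> Im w' \<le> -1"
proof -
  have "0 \<le> L" using assms(1) norm_ge_zero[of z] unfolding L_def by linarith
  have tri: "cmod (a + b + c) \<le> cmod a + cmod b + cmod c" for a b c :: complex
    by (metis add_mono norm_triangle_ineq order_refl order_trans)
  have "cmod (\<i> * of_real L * s) = L" "cmod (\<i> * of_real (L / 2) * s\<^sup>2) = L / 2"
    using assms(3) \<open>0 \<le> L\<close> by (simp_all add: norm_mult norm_power)
  then show "cmod z' \<le> R + 2 * L" "cmod w' \<le> R + 2 * L"
    using tri[of z "\<i> * of_real L * s" "- (\<i> * of_real (L / 2) * s\<^sup>2)"]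
      tri[of w "\<i> * of_real L * s" "\<i> * of_real (L / 2) * s\<^sup>2"] assms(1,2) \<open>0 \<le> L\<close>
    unfolding z'_def w'_def by (simp_all only: diff_conv_add_uminus norm_minus_cancel)
  define x where "x = Re s"
  have x: "-1 \<le> x" "x \<le> 1" using abs_Re_le_cmod[of s] assms(3) by (auto simp: x_def)
  have "(Re s)\<^sup>2 + (Im s)\<^sup>2 = 1" using assms(3) cmod_power2[of s] by simp
  then have Re_s2: "Re (s\<^sup>2) = 2 * x\<^sup>2 - 1" by (simp add: Re_power2 x_def)
  have "Im z' = Im z + L * x - L / 2 * Re (s\<^sup>2)" "Im w' = Im w + L * x + L / 2 * Re (s\<^sup>2)"
    unfolding z'_def w'_def by (simp_all add: x_def)
  then have Im_z': "Im z' = Im z + L * x * (1 - x) + L / 2"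
    and Im_w': "Im w' = Im w + L * x * (1 + x) - L / 2"
    unfolding Re_s2 by (simp_all add: algebra_simps power2_eq_square)
  have "L / 2 = R + 1" by (simp add: L_def)
  have "- R \<le> Im z" "Im w \<le> R" using abs_Im_le_cmod[of z] abs_Im_le_cmod[of w] assms(1,2) by auto
  show "1 \<le> Im z' \<or> Im w' \<le> -1"
  proof (cases "0 \<le> x")
    case True
    then have "0 \<le> L * x * (1 - x)" using x \<open>0 \<le> L\<close> by simp
    then show ?thesis using Im_z' \<open>- R \<le> Im z\<close> \<open>L / 2 = R + 1\<close> by linarith
  next
    case False
    then have "L * x * (1 + x) \<le> 0" using x \<open>0 \<le> L\<close> by (simp add: mult_nonneg_nonpos mult_nonpos_nonneg)
    then show ?thesis using Im_w' \<open>Im w \<le> R\<close> \<open>L / 2 = R + 1\<close> by linarith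
  qed
qed

lemma norm_poly_le_if_scaled_jensen_bounded:
  assumes bound: "\<And>n w. 1 \<le> n \<Longrightarrow> cmod w \<le> \<rho> \<Longrightarrow> cmod (scaled_jensen P n z w) \<le> K" and "0 < \<rho>"
  shows "cmod (poly (P k) z) * \<rho> ^ k \<le> K"
proof -
  have "falling_ratio n k * (cmod (poly (P k) z) * \<rho> ^ k) \<le> K" if "1 \<le> n" for n
  proof -
    define W where "W = (\<Sum>j\<le>n. monom (of_real (falling_ratio n j) * poly (P j) z) j)"
    have "poly W w = scaled_jensen P n z w" for w
      unfolding W_def scaled_jensen_def by (simp add: poly_sum poly_monom)
    then have "cmod (coeff W k) * \<rho> ^ k \<le> K"
      using bound[OF that] \<open>0 < \<rho>\<close> by (intro poly_coeff_bound) auto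
    moreover have "coeff W k = of_real (falling_ratio n k) * poly (P k) z"
      by (cases "k \<le> n") (simp_all add: W_def coeff_sum coeff_monom falling_ratio_eq_0)
    moreover have "0 \<le> falling_ratio n k" using falling_ratio_bounds[OF that] by simp
    ultimately show ?thesis by (simp add: norm_mult mult.assoc)
  qed
  moreover have "(\<lambda>n. falling_ratio n k * (cmod (poly (P k) z) * \<rho> ^ k)) \<longlonglongrightarrow> 1 * (cmod (poly (P k) z) * \<rho> ^ k)"
    by (intro tendsto_mult tendsto_falling_ratio tendsto_const)
  ultimately show ?thesis by (intro LIMSEQ_le_const2[of _ _ K]) auto
qed

lemma square_le_four_power: "real k ^ 2 \<le> 4 ^ k"
proof -
  have "real k \<le> 2 ^ k" using less_exp[of k] by (metis of_nat_le_iff of_nat_numeral of_nat_power less_imp_le)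
  then have "real k ^ 2 \<le> (2 ^ k) ^ 2" by (intro power_mono) auto
  also have "\<dots> = (2 ^ 2) ^ k" by (simp only: power_mult[symmetric] mult.commute)
  also have "\<dots> = 4 ^ k" by simp
  finally show ?thesis .
qed

lemma norm_falling_ratio_defect_le:
  assumes "1 \<le> n" "0 \<le> C" "cmod t \<le> C * (1 / 8) ^ k"
  shows "cmod (of_real (falling_ratio n k - 1) * t) \<le> C / real n * (1 / 2) ^ k"
proof -
  have r: "0 \<le> falling_ratio n k" "falling_ratio n k \<le> 1" "1 - falling_ratio n k \<le> real k ^ 2 / real n"
    using falling_ratio_bounds[OF assms(1)] by auto
  have "cmod (of_real (falling_ratio n k - 1) :: complex) = 1 - falling_ratio n k"
    using r(2) unfolding norm_of_real by simp
  then have "cmod (of_real (falling_ratio n k - 1) * t) = (1 - falling_ratio n k) * cmod t"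
    by (simp only: norm_mult)
  also have "\<dots> \<le> (real k ^ 2 / real n) * (C * (1 / 8) ^ k)"
    by (rule mult_mono) (use r assms(3) in auto)
  also have "\<dots> = C / real n * (real k ^ 2 * (1 / 8) ^ k)" by simp
  also have "\<dots> \<le> C / real n * (1 / 2) ^ k"
  proof (rule mult_left_mono)
    have "real k ^ 2 * (1 / 8) ^ k \<le> 4 ^ k * (1 / 8 :: real) ^ k"
      by (intro mult_right_mono square_le_four_power) simp
    also have "\<dots> = (1 / 2) ^ k" by (simp flip: power_mult_distrib)
    finally show "real k ^ 2 * (1 / 8) ^ k \<le> (1 / 2 :: real) ^ k" .
  qed (use assms(2) in simp)
  finally show ?thesis .
qed

lemma uniform_limit_by_null_bound:
  assumes "\<And>n x. x \<in> S \<Longrightarrow> dist (f n x) (g x) \<le> b n" and "b \<longlonglongrightarrow> 0"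
  shows "uniform_limit S f g sequentially"
proof (rule uniform_limitI)
  fix e :: real assume "0 < e"
  then have "\<forall>\<^sub>F n in sequentially. b n < e" using assms(2) by (simp add: order_tendstoD(2))
  then show "\<forall>\<^sub>F n in sequentially. \<forall>x\<in>S. dist (f n x) (g x) < e"
    by eventually_elim (use assms(1) le_less_trans in blast)
qed

context
  fixes P :: "nat \<Rightarrow> complex poly"
  assumes jensen_zero_free: "\<And>n z w. 0 < Im z \<Longrightarrow> 0 < Im w \<Longrightarrow> jensen P n z w \<noteq> 0"
begin

lemma zero_free_jensen_poly_0_nonzero: "0 < Im z \<Longrightarrow> poly (P 0) z \<noteq> 0"
  using jensen_zero_free[of z \<i> 0] by (simp add: jensen_def falling_def)

lemma zero_free_jensen_scaled_jensen_nonzero: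
  "1 \<le> n \<Longrightarrow> 0 < Im z \<Longrightarrow> 0 < Im w \<Longrightarrow> scaled_jensen P n z w \<noteq> 0"
  by (simp add: scaled_jensen_eq_jensen jensen_zero_free)

lemma stable_poly_line_poly:
  assumes "1 \<le> n" "0 \<le> a" "0 < Im z0"
  shows "stable_poly (line_poly P n z0 a)"
  unfolding stable_poly_def poly_line_poly
  using assms by (intro allI impI zero_free_jensen_scaled_jensen_nonzero) (auto simp: add_pos_nonneg)

text \<open>Along each line, \<open>s \<mapsto> scaled_jensen P n (z0 + a s) s\<close> is a stable polynomial whose
  first three coefficients, and the inverse of the constant one, are bounded uniformly in \<open>n\<close>.\<close>
lemma scaled_jensen_bounded_on_lines:
  assumes "0 \<le> A"
  obtains K where "\<And>n z0 a s. 1 \<le> n \<Longrightarrow> 1 \<le> Im z0 \<Longrightarrow> cmod z0 \<le> B1 \<Longrightarrow> 0 \<le> a \<Longrightarrow> a \<le> A \<Longrightarrow>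
    cmod s \<le> B \<Longrightarrow> cmod (scaled_jensen P n (z0 + of_real a * s) s) \<le> K"
proof -
  obtain M where "0 \<le> M" and M: "\<And>k z. k \<le> 2 \<Longrightarrow> cmod z \<le> B1 + A \<Longrightarrow> cmod (poly (P k) z) \<le> M"
    using poly_family_bounded_cball[of "{..2}"] by auto
  have "compact (cball 0 B1 \<inter> {z. 1 \<le> Im z})"
    by (intro compact_Int_closed compact_cball closed_halfspace_Im_ge)
  then obtain \<delta> where "0 < \<delta>" and \<delta>: "\<And>z. z \<in> cball 0 B1 \<inter> {z. 1 \<le> Im z} \<Longrightarrow> \<delta> \<le> cmod (poly (P 0) z)"
    by (rule continuous_nonzero_bounded_below[where f = "poly (P 0)"])
      (auto intro: continuous_intros simp: zero_free_jensen_poly_0_nonzero)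
  define L where "L = 3 * M / \<delta>"
  show ?thesis
  proof (rule that[of "3 * M * exp (L * B + (3 * L\<^sup>2 + 2 * L) * B\<^sup>2)"])
    fix n :: nat and z0 s :: complex and a :: real
    assume n: "1 \<le> n" and z0: "1 \<le> Im z0" "cmod z0 \<le> B1" and a: "0 \<le> a" "a \<le> A" and s: "cmod s \<le> B"
    define q where "q = line_poly P n z0 a"
    have "stable_poly q" unfolding q_def using n a z0 by (intro stable_poly_line_poly) auto
    moreover have "\<delta> \<le> cmod (coeff q 0)" using \<delta> z0 by (simp add: q_def coeff_0_line_poly)
    moreover have "cmod (coeff q k) \<le> 3 * M" if "k \<le> 2" for k
    proof -
      have "cmod (coeff q k) \<le> real (Suc k) * M"
        unfolding q_def using n M z0 a \<open>k \<le> 2\<close>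
        by (intro norm_coeff_line_poly_le norm_coeff_pcompose_line_le) auto
      also have "\<dots> \<le> 3 * M" using \<open>k \<le> 2\<close> \<open>0 \<le> M\<close> by (intro mult_right_mono) auto
      finally show ?thesis .
    qed
    ultimately have "cmod (poly q s) \<le> 3 * M * exp (L * B + (3 * L\<^sup>2 + 2 * L) * B\<^sup>2)"
      using \<open>0 < \<delta>\<close> s unfolding L_def by (intro stable_poly_uniform_bound) auto
    then show "cmod (scaled_jensen P n (z0 + of_real a * s) s) \<le> 3 * M * exp (L * B + (3 * L\<^sup>2 + 2 * L) * B\<^sup>2)"
      by (simp add: q_def poly_line_poly)
  qed
qed

text \<open>A shear \<open>z \<mapsto> z - (B + 1) w\<close> moves the part where \<open>Im w \<le> -1\<close> onto lines
  through points with \<open>Im z \<ge> 1\<close>.\<close>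
lemma scaled_jensen_bounded_off_strip:
  assumes "0 \<le> B"
  obtains K where "\<And>n z w. 1 \<le> n \<Longrightarrow> cmod z \<le> B \<Longrightarrow> cmod w \<le> B \<Longrightarrow> 1 \<le> Im z \<or> Im w \<le> -1 \<Longrightarrow>
    cmod (scaled_jensen P n z w) \<le> K"
proof -
  obtain K where K: "\<And>n z0 a s. 1 \<le> n \<Longrightarrow> 1 \<le> Im z0 \<Longrightarrow> cmod z0 \<le> B + (B + 1) * B \<Longrightarrow> 0 \<le> a \<Longrightarrow>
    a \<le> B + 1 \<Longrightarrow> cmod s \<le> B \<Longrightarrow> cmod (scaled_jensen P n (z0 + of_real a * s) s) \<le> K"
    using scaled_jensen_bounded_on_lines[of "B + 1"] assms by auto
  show ?thesis
  proof (rule that[of K])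
    fix n :: nat and z w :: complex
    assume n: "1 \<le> n" and zw: "cmod z \<le> B" "cmod w \<le> B" and strip: "1 \<le> Im z \<or> Im w \<le> -1"
    show "cmod (scaled_jensen P n z w) \<le> K"
    proof (cases "1 \<le> Im z")
      case True
      then show ?thesis using K[of n z 0 w] n zw assms by (simp add: add_increasing2)
    next
      case False
      define z0 where "z0 = z - of_real (B + 1) * w"
      have "- B \<le> Im z" using abs_Im_le_cmod[of z] zw by linarith
      moreover have "(B + 1) * Im w \<le> - (B + 1)"
        using mult_left_mono[of "Im w" "-1" "B + 1"] False strip assms by simp
      ultimately have "1 \<le> Im z0" by (simp add: z0_def algebra_simps)
      moreover have "cmod z0 \<le> B + (B + 1) * B"
      proof -
        have "cmod z0 \<le> cmod z + (B + 1) * cmod w"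
          using norm_triangle_ineq4[of z "of_real (B + 1) * w"] assms by (simp add: z0_def norm_mult)
        moreover have "(B + 1) * cmod w \<le> (B + 1) * B" using zw assms by (intro mult_left_mono) auto
        ultimately show ?thesis using zw by linarith
      qed
      ultimately show ?thesis using K[of n z0 "B + 1" w] n zw assms by (simp add: z0_def)
    qed
  qed
qed

text \<open>The maximum principle carries the bound over to the bidisc: the analytic disc of
  \<open>quadratic_disc_off_strip\<close> passes through \<open>(z, w)\<close> at \<open>s = 0\<close> and maps the unit circle
  into the region of \<open>scaled_jensen_bounded_off_strip\<close>.\<close>
lemma scaled_jensen_bounded_on_bidisc:
  assumes "0 \<le> R"
  obtains K where "\<And>n z w. 1 \<le> n \<Longrightarrow> cmod z \<le> R \<Longrightarrow> cmod w \<le> R \<Longrightarrow> cmod (scaled_jensen P n z w) \<le> K"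
proof -
  define L where "L = 2 * R + 2"
  obtain K where K: "\<And>n z w. 1 \<le> n \<Longrightarrow> cmod z \<le> R + 2 * L \<Longrightarrow> cmod w \<le> R + 2 * L \<Longrightarrow>
      1 \<le> Im z \<or> Im w \<le> -1 \<Longrightarrow> cmod (scaled_jensen P n z w) \<le> K"
    using scaled_jensen_bounded_off_strip[of "R + 2 * L"] assms by (auto simp: L_def)
  show ?thesis
  proof (rule that[of K])
    fix n :: nat and z w :: complex
    assume n: "1 \<le> n" and zw: "cmod z \<le> R" "cmod w \<le> R"
    define \<phi>1 where "\<phi>1 = [:z, \<i> * of_real L, - \<i> * of_real (L / 2):]"
    define \<phi>2 where "\<phi>2 = [:w, \<i> * of_real L, \<i> * of_real (L / 2):]"
    define D where "D = (\<Sum>k\<le>n. smult (of_real (falling_ratio n k)) (pcompose (P k) \<phi>1 * \<phi>2 ^ k))"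
    have poly_D: "poly D s = scaled_jensen P n (poly \<phi>1 s) (poly \<phi>2 s)" for s
      unfolding D_def scaled_jensen_def by (simp add: poly_sum poly_pcompose algebra_simps)
    have "cmod (coeff D 0) * 1 ^ 0 \<le> K"
    proof (rule poly_coeff_bound)
      fix s :: complex assume "cmod s = 1"
      have "poly \<phi>1 s = z + \<i> * of_real L * s - \<i> * of_real (L / 2) * s\<^sup>2"
        "poly \<phi>2 s = w + \<i> * of_real L * s + \<i> * of_real (L / 2) * s\<^sup>2"
        by (simp_all add: \<phi>1_def \<phi>2_def algebra_simps power2_eq_square)
      then show "cmod (poly D s) \<le> K"
        unfolding poly_D using quadratic_disc_off_strip[OF zw \<open>cmod s = 1\<close>] n
        by (intro K) (simp_all add: L_def)
    qed simp
    moreover have "coeff D 0 = scaled_jensen P n z w"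
      by (simp add: poly_0_coeff_0[symmetric] poly_D \<phi>1_def \<phi>2_def)
    ultimately show "cmod (scaled_jensen P n z w) \<le> K" by simp
  qed
qed

text \<open>The ratio \<open>1/8\<close> is what \<open>norm_falling_ratio_defect_le\<close> needs to absorb the factor \<open>k\<^sup>2\<close>.\<close>
lemma series_terms_geometric_bound:
  assumes "0 \<le> R"
  obtains C where "0 \<le> C" "\<And>k z w. cmod z \<le> R \<Longrightarrow> cmod w \<le> R \<Longrightarrow> cmod (poly (P k) z * w ^ k) \<le> C * (1 / 8) ^ k"
proof -
  define \<rho> where "\<rho> = 8 * R + 1"
  have \<rho>: "0 < \<rho>" "R \<le> \<rho>" using assms by (auto simp: \<rho>_def)
  obtain K where K: "\<And>n z w. 1 \<le> n \<Longrightarrow> cmod z \<le> \<rho> \<Longrightarrow> cmod w \<le> \<rho> \<Longrightarrow> cmod (scaled_jensen P n z w) \<le> K"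
    using scaled_jensen_bounded_on_bidisc[of \<rho>] \<rho> by auto
  show ?thesis
  proof (rule that[of "max K 0"])
    fix k :: nat and z w :: complex assume z: "cmod z \<le> R" and w: "cmod w \<le> R"
    have K': "cmod (poly (P k) z) * \<rho> ^ k \<le> K"
      using K z \<rho> by (intro norm_poly_le_if_scaled_jensen_bounded) auto
    have "cmod (w ^ k) \<le> (\<rho> / 8) ^ k"
      unfolding norm_power using w assms by (intro power_mono) (auto simp: \<rho>_def)
    then have "cmod (poly (P k) z * w ^ k) \<le> cmod (poly (P k) z) * (\<rho> / 8) ^ k"
      by (simp add: norm_mult mult_left_mono)
    also have "\<dots> = cmod (poly (P k) z) * \<rho> ^ k * (1 / 8) ^ k" by (simp add: power_divide)
    also have "\<dots> \<le> max K 0 * (1 / 8) ^ k" by (intro mult_right_mono) (use K' in auto)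
    finally show "cmod (poly (P k) z * w ^ k) \<le> max K 0 * (1 / 8) ^ k" .
  qed simp
qed

lemma summable_series_terms: "summable (\<lambda>k. poly (P k) z * w ^ k)"
proof -
  define R where "R = max (cmod z) (cmod w)"
  obtain C where "\<And>k z w. cmod z \<le> R \<Longrightarrow> cmod w \<le> R \<Longrightarrow> cmod (poly (P k) z * w ^ k) \<le> C * (1 / 8) ^ k"
  proof (rule series_terms_geometric_bound)
    show "0 \<le> R" by (simp add: R_def le_max_iff_disj)
  qed (rule that)
  then have bound: "\<And>k. cmod (poly (P k) z * w ^ k) \<le> C * (1 / 8) ^ k" by (simp add: R_def)
  show ?thesis
  proof (rule summable_comparison_test'[where g = "\<lambda>k. C * (1 / 8) ^ k"])
    show "summable (\<lambda>k. C * (1 / 8 :: real) ^ k)" by (intro summable_mult summable_geometric) simp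
  qed (rule bound)
qed

lemma norm_scaled_jensen_minus_suminf_le:
  assumes "0 \<le> R"
  obtains C where "\<And>n z w. 1 \<le> n \<Longrightarrow> cmod z \<le> R \<Longrightarrow> cmod w \<le> R \<Longrightarrow>
    cmod (scaled_jensen P n z w - (\<Sum>k. poly (P k) z * w ^ k)) \<le> C / real n"
proof -
  obtain C where "0 \<le> C" and C: "\<And>k z w. cmod z \<le> R \<Longrightarrow> cmod w \<le> R \<Longrightarrow> cmod (poly (P k) z * w ^ k) \<le> C * (1 / 8) ^ k"
    using series_terms_geometric_bound[OF assms] by blast
  show ?thesis
  proof (rule that[of "2 * C"])
    fix n :: nat and z w :: complex assume n: "1 \<le> n" and zw: "cmod z \<le> R" "cmod w \<le> R"
    define f where "f k = of_real (falling_ratio n k - 1) * (poly (P k) z * w ^ k)" for k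
    have "f sums (scaled_jensen P n z w - (\<Sum>k. poly (P k) z * w ^ k))"
      unfolding f_def using sums_diff[OF sums_scaled_jensen summable_sums[OF summable_series_terms]]
      by (simp add: algebra_simps)
    then have "scaled_jensen P n z w - (\<Sum>k. poly (P k) z * w ^ k) = suminf f" by (simp add: sums_iff)
    have bound: "cmod (f k) \<le> C / real n * (1 / 2) ^ k" for k
      unfolding f_def by (rule norm_falling_ratio_defect_le[OF n \<open>0 \<le> C\<close> C[OF zw]])
    have "cmod (suminf f) \<le> (\<Sum>k. C / real n * (1 / 2) ^ k)"
      by (rule norm_suminf_le[OF bound]) (intro summable_mult summable_geometric, simp)
    also have "\<dots> = 2 * C / real n"
      using suminf_mult[OF summable_geometric[of "1 / 2 :: real"], of "C / real n"] suminf_geometric[of "1 / 2 :: real"] by simp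
    finally show "cmod (scaled_jensen P n z w - (\<Sum>k. poly (P k) z * w ^ k)) \<le> 2 * C / real n"
      by (simp only: \<open>scaled_jensen P n z w - (\<Sum>k. poly (P k) z * w ^ k) = suminf f\<close>)
  qed
qed

lemma uniform_limit_scaled_jensen:
  assumes "compact K"
  shows "uniform_limit K (\<lambda>n (z, w). scaled_jensen P (Suc n) z w) (\<lambda>(z, w). \<Sum>k. poly (P k) z * w ^ k) sequentially"
proof -
  obtain R where R: "\<And>x. x \<in> K \<Longrightarrow> norm x \<le> R"
    using compact_imp_bounded[OF assms] unfolding bounded_iff by blast
  then have "0 \<le> R" if "K \<noteq> {}" using that norm_ge_zero order_trans by blast
  show ?thesis
  proof (cases "K = {}")
    case False
    then obtain C where C: "\<And>n z w. 1 \<le> n \<Longrightarrow> cmod z \<le> R \<Longrightarrow> cmod w \<le> R \<Longrightarrow>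
      cmod (scaled_jensen P n z w - (\<Sum>k. poly (P k) z * w ^ k)) \<le> C / real n"
      using norm_scaled_jensen_minus_suminf_le[OF \<open>K \<noteq> {} \<Longrightarrow> 0 \<le> R\<close>[OF False]] by blast
    show ?thesis
    proof (rule uniform_limit_by_null_bound)
      show "dist ((\<lambda>(z, w). scaled_jensen P (Suc n) z w) x) ((\<lambda>(z, w). \<Sum>k. poly (P k) z * w ^ k) x) \<le> C / real (Suc n)"
        if "x \<in> K" for n x
        using C[of "Suc n" "fst x" "snd x"] R[OF that] norm_fst_le[of "fst x" "snd x"] norm_snd_le[of "snd x" "fst x"]
        by (auto simp: dist_norm case_prod_unfold)
      show "(\<lambda>n. C / real (Suc n)) \<longlonglongrightarrow> 0"
        using lim_const_over_n[of C] by (rule LIMSEQ_Suc)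
    qed
  qed simp
qed

lemma H2bar_power_mult_series: "H2bar (\<lambda>(z, w). w ^ m * (\<Sum>k. poly (P k) z * w ^ k))"
  unfolding H2bar_def
proof (intro exI[of _ "\<lambda>n (z, w). w ^ m * scaled_jensen P (Suc n) z w"] conjI allI impI)
  fix n
  have "zero_free_uhp2 (\<lambda>(z, w). w ^ m * scaled_jensen P (Suc n) z w)"
    unfolding zero_free_uhp2_def using zero_free_jensen_scaled_jensen_nonzero by fastforce
  then show "H2 (\<lambda>(z, w). w ^ m * scaled_jensen P (Suc n) z w)"
    using H2_iff_zero_free_uhp2 is_poly2_scaled_jensen by (simp add: case_prod_unfold)
next
  fix K :: "(complex \<times> complex) set" assume "compact K"
  define G where "G = (\<lambda>(z, w). \<Sum>k. poly (P k) z * w ^ k)"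
  have lim: "uniform_limit K (\<lambda>n (z, w). scaled_jensen P (Suc n) z w) G sequentially"
    unfolding G_def using \<open>compact K\<close> by (rule uniform_limit_scaled_jensen)
  have "continuous_on K G"
    by (rule uniform_limit_theorem[OF _ lim])
      (auto simp: scaled_jensen_def case_prod_unfold intro!: always_eventually continuous_intros)
  then have "uniform_limit K (\<lambda>n x. snd x ^ m * (\<lambda>(z, w). scaled_jensen P (Suc n) z w) x) (\<lambda>x. snd x ^ m * G x) sequentially"
    using \<open>compact K\<close> lim
    by (intro uniform_lim_mult uniform_limit_const bounded_continuous_image continuous_intros)
  then show "uniform_limit K (\<lambda>n (z, w). w ^ m * scaled_jensen P (Suc n) z w)
      (\<lambda>(z, w). w ^ m * (\<Sum>k. poly (P k) z * w ^ k)) sequentially"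
    by (simp add: G_def case_prod_unfold)
qed

end

lemma H2bar_zero: "H2bar (\<lambda>_. 0)"
  unfolding H2bar_def
proof (intro exI[of _ "\<lambda>n _. 1 / of_nat (Suc n)"] conjI allI impI)
  show "H2 (\<lambda>_. 1 / of_nat (Suc n) :: complex)" for n
    using H2_iff_zero_free_uhp2[OF is_poly2_const] by (simp add: zero_free_uhp2_def del: of_nat_Suc)
  show "uniform_limit K (\<lambda>n _. 1 / of_nat (Suc n)) (\<lambda>_. 0 :: complex) sequentially" for K
    using LIMSEQ_Suc[OF lim_const_over_n[of 1]]
    by (intro uniform_limit_by_null_bound[where b = "\<lambda>n. 1 / real (Suc n)"]) (simp_all add: norm_divide del: of_nat_Suc)
qed

lemma falling_add: "falling (n + m) (j + m) = falling (n + m) m * falling n j"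
proof (induction j)
  case 0
  then show ?case by (simp add: falling_def)
next
  case (Suc j)
  then show ?case by (simp add: falling_Suc)
qed

lemma sum_atMost_add_split:
  fixes f :: "nat \<Rightarrow> 'a::comm_monoid_add"
  shows "(\<Sum>i\<le>n + m. f i) = (\<Sum>i<m. f i) + (\<Sum>i\<le>n. f (i + m))"
  by (induction n) (simp_all add: lessThan_Suc_atMost[symmetric] add_ac)

lemma jensen_shift:
  assumes "\<And>k. k < m \<Longrightarrow> P k = 0"
  shows "jensen P (n + m) z w = of_nat (falling (n + m) m) * w ^ m * jensen (\<lambda>j. P (j + m)) n z w"
  unfolding jensen_def sum_atMost_add_split[where m = m] falling_add
  using assms by (simp add: sum_distrib_left power_add algebra_simps)

lemma zero_free_jensen_shift:
  assumes H2_or_zero: "\<And>n. H2 (\<lambda>(z, w). jensen P n z w) \<or> (\<lambda>(z, w). jensen P n z w) = (\<lambda>_. 0)"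
    and below: "\<And>k. k < m \<Longrightarrow> P k = 0" and "P m \<noteq> 0"
    and "0 < Im z" "0 < Im w"
  shows "jensen (\<lambda>j. P (j + m)) n z w \<noteq> 0"
proof
  assume "jensen (\<lambda>j. P (j + m)) n z w = 0"
  then have "\<not> H2 (\<lambda>(z, w). jensen P (n + m) z w)"
    using assms(4,5) jensen_shift[where P = P and m = m and n = n and z = z and w = w] below
    unfolding H2_def by auto
  then have vanishes: "jensen P (n + m) z' w' = 0" for z' w'
    using H2_or_zero[of "n + m"] by (metis case_prod_conv)
  have "falling (n + m) m \<noteq> 0" by (simp add: falling_eq_binomial_fact)
  have "poly (P m) z' = 0" for z'
  proof -
    define W where "W = (\<Sum>j\<le>n. monom (of_nat (falling n j) * poly (P (j + m)) z') j)"
    have "poly W t = jensen (\<lambda>j. P (j + m)) n z' t" for t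
      unfolding W_def jensen_def by (simp add: poly_sum poly_monom)
    moreover have "jensen (\<lambda>j. P (j + m)) n z' t = 0" if "0 < Im t" for t
      using vanishes[of z' t] jensen_shift[where P = P and m = m and n = n and z = z' and w = t]
        below \<open>falling (n + m) m \<noteq> 0\<close> that by auto
    ultimately have "W = 0"
      using uhp_nonempty by (intro poly_eq_0_if_vanishes_on_open[OF open_halfspace_Im_gt]) auto
    moreover have "coeff W 0 = poly (P m) z'" by (simp add: W_def coeff_sum coeff_monom falling_def)
    ultimately show ?thesis by simp
  qed
  with \<open>P m \<noteq> 0\<close> show False using poly_all_0_iff_0 by blast
qed

text \<open>If \<open>P\<^sub>m\<close> is the first nonzero coefficient, the shifted sequence has zero-free Jensen
  polynomials and its series, multiplied by \<open>w\<^sup>m\<close>, is the series of \<open>P\<close>.\<close>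
lemma jensen_H2_or_zero_imp_series_in_H2bar:
  assumes H2_or_zero: "\<And>n. H2 (\<lambda>(z, w). jensen P n z w) \<or> (\<lambda>(z, w). jensen P n z w) = (\<lambda>_. 0)"
  shows "series_in_H2bar P"
proof (cases "\<forall>k. P k = 0")
  case True
  then show ?thesis unfolding series_in_H2bar_def using H2bar_zero by auto
next
  case False
  define m where "m = (LEAST k. P k \<noteq> 0)"
  have "P m \<noteq> 0" using False unfolding m_def by (metis (mono_tags) LeastI)
  have below: "P k = 0" if "k < m" for k using that not_less_Least unfolding m_def by blast
  have "H2bar (\<lambda>(z, w). w ^ m * (\<Sum>j. poly (P (j + m)) z * w ^ j))"
    using zero_free_jensen_shift[OF H2_or_zero below \<open>P m \<noteq> 0\<close>] by (rule H2bar_power_mult_series)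
  moreover have "(\<lambda>k. poly (P k) z * w ^ k) sums (w ^ m * (\<Sum>j. poly (P (j + m)) z * w ^ j))" for z w
  proof -
    have "(\<lambda>j. w ^ m * (poly (P (j + m)) z * w ^ j)) sums (w ^ m * (\<Sum>j. poly (P (j + m)) z * w ^ j))"
      using summable_series_terms[OF zero_free_jensen_shift[OF H2_or_zero below \<open>P m \<noteq> 0\<close>]]
      by (intro sums_mult summable_sums)
    then show ?thesis
      using below by (subst sums_zero_iff_shift[of m, symmetric]) (auto simp: power_add algebra_simps)
  qed
  ultimately show ?thesis unfolding series_in_H2bar_def by (intro exI[of _ "\<lambda>(z, w). w ^ m * (\<Sum>j. poly (P (j + m)) z * w ^ j)"]) auto
qed

theorem mainTheorem16:
  fixes P :: "nat \<Rightarrow> complex poly"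
  shows "series_in_H2bar P \<longleftrightarrow>
    (\<forall>n. let f = (\<lambda>(z, w). \<Sum>k\<le>n. of_nat (falling n k) * poly (P k) z * w ^ k)
         in H2 f \<or> f = (\<lambda>_. 0))"
  unfolding Let_def jensen_def[symmetric]
proof
  assume "series_in_H2bar P"
  then obtain G where "\<And>z w. (\<lambda>k. poly (P k) z * w ^ k) sums G (z, w)" "H2bar G"
    unfolding series_in_H2bar_def by blast
  then show "\<forall>n. H2 (\<lambda>(z, w). jensen P n z w) \<or> (\<lambda>(z, w). jensen P n z w) = (\<lambda>_. 0)"
    using H2bar_imp_jensen_H2_or_zero by blast
next
  assume "\<forall>n. H2 (\<lambda>(z, w). jensen P n z w) \<or> (\<lambda>(z, w). jensen P n z w) = (\<lambda>_. 0)"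
  then show "series_in_H2bar P" by (intro jensen_H2_or_zero_imp_series_in_H2bar) blast
qed
end
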